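(* Let $k$ be a field, $\Gamma=(V,E)$ a finite connected quiver, $I\subseteq R^2$ a two-sided ideal of $k\Gamma$, and $\mathscr{Q}$ a fixed basis of $k\Gamma/I$ as in the context. Then $\mathfrak{B}=\mathfrak{B}_1\cup\mathfrak{B}_2$ is a $k$-basis of the space $\mathrm{Diff}(k\Gamma,k\Gamma/I)$ of differential operators from $k\Gamma$ to $k\Gamma/I$, where $\mathfrak{B}_1=\{D_{\overline{s}}\mid\overline{s}\in\mathscr{Q}_A\}$ and $\mathfrak{B}_2=\{D_{r,\overline{s}}\mid r\in E,\ \overline{s}\in\mathscr{Q},\ r\parallel\overline{s}\}$.
   Context: For a path $p$, $t(p),h(p)$ are its start and end vertex (vertices are trivial paths); paths multiply by left-to-right concatenation (product $0$ if they do not concatenate). $R$ is the ideal generated by $E$, $\overline{x}=x+I$. A differential operator from $k\Gamma$ to $k\Gamma/I$ is a $k$-linear map $D$ with $D(xy)=D(x)\overline{y}+\overline{x}D(y)$. $\mathscr{Q}$ is a fixed $k$-basis of $k\Gamma/I$ consisting of residue classes of paths and containing $\overline{v}$ ($v\in V$) and $\overline{e}$ ($e\in E$); for $\overline{q}\in\mathscr{Q}$, $t(\overline{q}),h(\overline{q})$ are the start/end vertex of any representing path (well defined), and $r\parallel\overline{s}$ means $t(r)=t(\overline{s})$, $h(r)=h(\overline{s})$. $\mathscr{Q}_A=\{\overline{q}\in\mathscr{Q}\mid t(\overline{q})\neq h(\overline{q})\}$. For $m\in k\Gamma/I$, $D_m$ is the inner differential operator $x\mapsto m\overline{x}-\overline{x}m$.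 For $r\in E$ and $\overline{s}\in\mathscr{Q}$ with $r\parallel\overline{s}$, $D_{r,\overline{s}}$ is the unique differential operator $k\Gamma\to k\Gamma/I$ with $D_{r,\overline{s}}(r)=\overline{s}$ and $D_{r,\overline{s}}(x)=0$ for all $x\in (E\setminus\{r\})\cup V$. *)

theory Defs
  imports Main
begin

text \<open>A path is a pair (v, es): a start vertex and a list of
  consecutive edges (es = [] gives the trivial path at v).\<close>

type_synonym ('v,'e) path = "'v \<times> 'e list"
type_synonym ('v,'e,'k) pa = "('v,'e) path \<Rightarrow> 'k"

definition is_path :: "'v set \<Rightarrow> 'e set \<Rightarrow> ('e \<Rightarrow> 'v) \<Rightarrow> ('e \<Rightarrow> 'v) \<Rightarrow> ('v,'e) path \<Rightarrow> bool" where
  "is_path V E src tgt p \<longleftrightarrow> fst p \<in> V \<and> set (snd p) \<subseteq> E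
     \<and> (snd p \<noteq> [] \<longrightarrow> src (hd (snd p)) = fst p)
     \<and> (\<forall>i. Suc i < length (snd p) \<longrightarrow> tgt (snd p ! i) = src (snd p ! Suc i))"

definition pend :: "('e \<Rightarrow> 'v) \<Rightarrow> ('v,'e) path \<Rightarrow> 'v" where
  "pend tgt p = (if snd p = [] then fst p else tgt (last (snd p)))"

definition finite_connected_quiver :: "'v set \<Rightarrow> 'e set \<Rightarrow> ('e \<Rightarrow> 'v) \<Rightarrow> ('e \<Rightarrow> 'v) \<Rightarrow> bool" where
  "finite_connected_quiver V E src tgt \<longleftrightarrow> finite V \<and> finite E
     \<and> (\<forall>e\<in>E. src e \<in> V \<and> tgt e \<in> V)
     \<and> (\<forall>u\<in>V. \<forall>w\<in>V. (u, w) \<in> ({(src e, tgt e) | e. e \<in> E} \<union> {(tgt e, src e) | e. e \<in> E})\<^sup>*)"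

definition PA :: "'v set \<Rightarrow> 'e set \<Rightarrow> ('e \<Rightarrow> 'v) \<Rightarrow> ('e \<Rightarrow> 'v) \<Rightarrow> ('v,'e,'k::zero) pa set" where
  "PA V E src tgt = {f. finite {p. f p \<noteq> 0} \<and> (\<forall>p. f p \<noteq> 0 \<longrightarrow> is_path V E src tgt p)}"

definition padd :: "('v,'e,'k::plus) pa \<Rightarrow> ('v,'e,'k) pa \<Rightarrow> ('v,'e,'k) pa" where
  "padd f g = (\<lambda>p. f p + g p)"

definition psc :: "'k::times \<Rightarrow> ('v,'e,'k) pa \<Rightarrow> ('v,'e,'k) pa" where
  "psc c f = (\<lambda>p. c * f p)"

text \<open>Multiplication: left-to-right concatenation of paths, extended bilinearly.\<close>
definition pmult :: "('e \<Rightarrow> 'v) \<Rightarrow> ('v,'e,'k::comm_ring_1) pa \<Rightarrow> ('v,'e,'k) pa \<Rightarrow> ('v,'e,'k) pa" where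
  "pmult tgt f g = (\<lambda>p. \<Sum>(q, r) \<in> {(q, r). f q \<noteq> 0 \<and> g r \<noteq> 0 \<and> pend tgt q = fst r
                                       \<and> (fst q, snd q @ snd r) = p}. f q * g r)"

definition delta :: "('v,'e) path \<Rightarrow> ('v,'e,'k::{zero,one}) pa" where
  "delta p = (\<lambda>q. if q = p then 1 else 0)"

definition is_ideal :: "'v set \<Rightarrow> 'e set \<Rightarrow> ('e \<Rightarrow> 'v) \<Rightarrow> ('e \<Rightarrow> 'v) \<Rightarrow> ('v,'e,'k::field) pa set \<Rightarrow> bool" where
  "is_ideal V E src tgt J \<longleftrightarrow> J \<subseteq> PA V E src tgt \<and> (\<lambda>_. 0) \<in> J
     \<and> (\<forall>x\<in>J. \<forall>y\<in>J. padd x y \<in> J) \<and> (\<forall>c. \<forall>x\<in>J. psc c x \<in> J)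
     \<and> (\<forall>x\<in>PA V E src tgt. \<forall>j\<in>J. pmult tgt x j \<in> J \<and> pmult tgt j x \<in> J)"

definition gen_ideal :: "'v set \<Rightarrow> 'e set \<Rightarrow> ('e \<Rightarrow> 'v) \<Rightarrow> ('e \<Rightarrow> 'v) \<Rightarrow> ('v,'e,'k::field) pa set \<Rightarrow> ('v,'e,'k) pa set" where
  "gen_ideal V E src tgt S = \<Inter>{J. is_ideal V E src tgt J \<and> S \<subseteq> J}"

definition Rid :: "'v set \<Rightarrow> 'e set \<Rightarrow> ('e \<Rightarrow> 'v) \<Rightarrow> ('e \<Rightarrow> 'v) \<Rightarrow> ('v,'e,'k::field) pa set" where
  "Rid V E src tgt = gen_ideal V E src tgt {delta (src e, [e]) | e. e \<in> E}"

definition R2 :: "'v set \<Rightarrow> 'e set \<Rightarrow> ('e \<Rightarrow> 'v) \<Rightarrow> ('e \<Rightarrow> 'v) \<Rightarrow> ('v,'e,'k::field) pa set" where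
  "R2 V E src tgt = gen_ideal V E src tgt
     {pmult tgt x y | x y. x \<in> Rid V E src tgt \<and> y \<in> Rid V E src tgt}"

text \<open>The quotient k Gamma / I: residue classes are cosets x + I.\<close>
definition cls :: "('v,'e,'k::field) pa set \<Rightarrow> ('v,'e,'k) pa \<Rightarrow> ('v,'e,'k) pa set" where
  "cls I x = {padd x i | i. i \<in> I}"

definition Qcar :: "'v set \<Rightarrow> 'e set \<Rightarrow> ('e \<Rightarrow> 'v) \<Rightarrow> ('e \<Rightarrow> 'v) \<Rightarrow> ('v,'e,'k::field) pa set \<Rightarrow> ('v,'e,'k) pa set set" where
  "Qcar V E src tgt I = cls I ` PA V E src tgt"

definition qadd :: "('v,'e,'k::field) pa set \<Rightarrow> ('v,'e,'k) pa set \<Rightarrow> ('v,'e,'k) pa set" where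
  "qadd A B = {padd a b | a b. a \<in> A \<and> b \<in> B}"

definition qscale :: "('v,'e,'k::field) pa set \<Rightarrow> 'k \<Rightarrow> ('v,'e,'k) pa set \<Rightarrow> ('v,'e,'k) pa set" where
  "qscale I c A = {padd (psc c a) i | a i. a \<in> A \<and> i \<in> I}"

definition qmult :: "('e \<Rightarrow> 'v) \<Rightarrow> ('v,'e,'k::field) pa set \<Rightarrow> ('v,'e,'k) pa set \<Rightarrow> ('v,'e,'k) pa set \<Rightarrow> ('v,'e,'k) pa set" where
  "qmult tgt I A B = {padd (pmult tgt a b) i | a b i. a \<in> A \<and> b \<in> B \<and> i \<in> I}"

definition qsum :: "('v,'e,'k::field) pa set \<Rightarrow> 'j set \<Rightarrow> ('j \<Rightarrow> ('v,'e,'k) pa set) \<Rightarrow> ('v,'e,'k) pa set" where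
  "qsum I S A = {padd (\<lambda>p. \<Sum>j\<in>S. f j p) i | f i. (\<forall>j\<in>S. f j \<in> A j) \<and> i \<in> I}"

definition is_quot_basis :: "'v set \<Rightarrow> 'e set \<Rightarrow> ('e \<Rightarrow> 'v) \<Rightarrow> ('e \<Rightarrow> 'v) \<Rightarrow> ('v,'e,'k::field) pa set \<Rightarrow> ('v,'e,'k) pa set set \<Rightarrow> bool" where
  "is_quot_basis V E src tgt I Qb \<longleftrightarrow> Qb \<subseteq> Qcar V E src tgt I
     \<and> (\<forall>A\<in>Qcar V E src tgt I. \<exists>S c. finite S \<and> S \<subseteq> Qb \<and> A = qsum I S (\<lambda>q. qscale I (c q) q))
     \<and> (\<forall>S c. finite S \<and> S \<subseteq> Qb \<and> qsum I S (\<lambda>q. qscale I (c q) q) = I \<longrightarrow> (\<forall>q\<in>S. c q = 0))"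

text \<open>Start / end vertex of a basis element (of any representing path).\<close>
definition qrep :: "'v set \<Rightarrow> 'e set \<Rightarrow> ('e \<Rightarrow> 'v) \<Rightarrow> ('e \<Rightarrow> 'v) \<Rightarrow> ('v,'e,'k::field) pa set \<Rightarrow> ('v,'e,'k) pa set \<Rightarrow> ('v,'e) path" where
  "qrep V E src tgt I q = (SOME p. is_path V E src tgt p \<and> cls I (delta p) = q)"

definition qt where "qt V E src tgt I q = fst (qrep V E src tgt I q)"
definition qh where "qh V E src tgt I q = pend tgt (qrep V E src tgt I q)"

definition QA :: "'v set \<Rightarrow> 'e set \<Rightarrow> ('e \<Rightarrow> 'v) \<Rightarrow> ('e \<Rightarrow> 'v) \<Rightarrow> ('v,'e,'k::field) pa set \<Rightarrow> ('v,'e,'k) pa set set \<Rightarrow> ('v,'e,'k) pa set set" where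
  "QA V E src tgt I Qb = {q \<in> Qb. qt V E src tgt I q \<noteq> qh V E src tgt I q}"

text \<open>Differential operators k Gamma -> k Gamma / I (k-linear, Leibniz rule);
  extensional: value 0 (= I) outside the carrier.\<close>
definition Diff :: "'v set \<Rightarrow> 'e set \<Rightarrow> ('e \<Rightarrow> 'v) \<Rightarrow> ('e \<Rightarrow> 'v) \<Rightarrow> ('v,'e,'k::field) pa set
     \<Rightarrow> (('v,'e,'k) pa \<Rightarrow> ('v,'e,'k) pa set) set" where
  "Diff V E src tgt I = {D.
     (\<forall>x\<in>PA V E src tgt. D x \<in> Qcar V E src tgt I)
   \<and> (\<forall>x. x \<notin> PA V E src tgt \<longrightarrow> D x = I)
   \<and> (\<forall>x\<in>PA V E src tgt. \<forall>y\<in>PA V E src tgt. D (padd x y) = qadd (D x) (D y))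
   \<and> (\<forall>c. \<forall>x\<in>PA V E src tgt. D (psc c x) = qscale I c (D x))
   \<and> (\<forall>x\<in>PA V E src tgt. \<forall>y\<in>PA V E src tgt.
        D (pmult tgt x y) = qadd (qmult tgt I (D x) (cls I y)) (qmult tgt I (cls I x) (D y)))}"

definition Dinner :: "'v set \<Rightarrow> 'e set \<Rightarrow> ('e \<Rightarrow> 'v) \<Rightarrow> ('e \<Rightarrow> 'v) \<Rightarrow> ('v,'e,'k::field) pa set
     \<Rightarrow> ('v,'e,'k) pa set \<Rightarrow> ('v,'e,'k) pa \<Rightarrow> ('v,'e,'k) pa set" where
  "Dinner V E src tgt I m = (\<lambda>x. if x \<in> PA V E src tgt
      then qadd (qmult tgt I m (cls I x)) (qscale I (-1) (qmult tgt I (cls I x) m)) else I)"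

definition Drs :: "'v set \<Rightarrow> 'e set \<Rightarrow> ('e \<Rightarrow> 'v) \<Rightarrow> ('e \<Rightarrow> 'v) \<Rightarrow> ('v,'e,'k::field) pa set
     \<Rightarrow> 'e \<Rightarrow> ('v,'e,'k) pa set \<Rightarrow> ('v,'e,'k) pa \<Rightarrow> ('v,'e,'k) pa set" where
  "Drs V E src tgt I r s = (THE D. D \<in> Diff V E src tgt I \<and> D (delta (src r, [r])) = s
      \<and> (\<forall>e\<in>E - {r}. D (delta (src e, [e])) = I) \<and> (\<forall>v\<in>V. D (delta (v, [])) = I))"

definition B1 where
  "B1 V E src tgt I Qb = {Dinner V E src tgt I s | s. s \<in> QA V E src tgt I Qb}"

definition B2 where
  "B2 V E src tgt I Qb = {Drs V E src tgt I r s | r s. r \<in> E \<and> s \<in> Qb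
      \<and> src r = qt V E src tgt I s \<and> tgt r = qh V E src tgt I s}"

definition is_diff_basis :: "'v set \<Rightarrow> 'e set \<Rightarrow> ('e \<Rightarrow> 'v) \<Rightarrow> ('e \<Rightarrow> 'v) \<Rightarrow> ('v,'e,'k::field) pa set
     \<Rightarrow> (('v,'e,'k) pa \<Rightarrow> ('v,'e,'k) pa set) set \<Rightarrow> bool" where
  "is_diff_basis V E src tgt I B \<longleftrightarrow> B \<subseteq> Diff V E src tgt I
     \<and> (\<forall>D\<in>Diff V E src tgt I. \<exists>S c. finite S \<and> S \<subseteq> B
          \<and> D = (\<lambda>x. qsum I S (\<lambda>F. qscale I (c F) (F x))))
     \<and> (\<forall>S c. finite S \<and> S \<subseteq> B \<and> (\<lambda>x. qsum I S (\<lambda>F. qscale I (c F) (F x))) = (\<lambda>x. I)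
          \<longrightarrow> (\<forall>F\<in>S. c F = 0))"

end

theory Submission
  imports Defs "HOL-Library.Function_Algebras"
begin

text \<open>A differential operator \<open>D : k\<Gamma> \<rightarrow> k\<Gamma>/I\<close> is determined by its values on the vertices
  and arrows, since every path is a product of arrows. For an arrow \<open>r\<close> and a basis path \<open>s\<close>
  parallel to it, replacing the occurrences of \<open>r\<close> by \<open>s\<close> one at a time gives \<open>D\<^sub>r\<^sub>,\<^sub>s\<close>.
  Given \<open>D\<close>, the Leibniz rule for the orthogonal idempotents \<open>v \<in> V\<close> shows that \<open>D\<close> agrees on the
  vertices with the inner operator of \<open>\<mu> = \<Sum>\<^sub>v D(v) v\<close>; as loops commute with the vertices,
  \<open>\<mu>\<close> may be taken in the span of \<open>Q\<^sub>A\<close>. The remaining operator vanishes on the vertices, so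
  it maps an arrow \<open>e\<close> to \<open>t(e) D(e) h(e)\<close>, a combination of basis paths parallel to \<open>e\<close>, that
  is, it is a combination of the \<open>D\<^sub>e\<^sub>,\<^sub>s\<close>. Conversely, evaluating a vanishing combination at
  the vertex \<open>h(s)\<close> isolates the coefficient of \<open>D\<^sub>s\<close>, and at an arrow \<open>e\<close> those of
  the \<open>D\<^sub>e\<^sub>,\<^sub>s\<close>.\<close>

section \<open>Finitely supported functions and the convolution product\<close>

definition supp :: "('a \<Rightarrow> 'k::field) \<Rightarrow> 'a set" where
  "supp f = {p. f p \<noteq> 0}"

definition finsupp :: "('a \<Rightarrow> 'k::field) set" where
  "finsupp = {f. finite (supp f)}"

lemma sum_fun_apply: "(sum F A) x = (\<Sum>i\<in>A. F i x)"
  by (induction A rule: infinite_finite_induct) auto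

lemma padd_eq_plus: "padd f g = f + g"
  by (simp add: padd_def plus_fun_def)

lemma psc_add: "psc c (f + g) = psc (c::'k::field) f + psc c g"
  by (rule ext) (simp add: psc_def distrib_left)
lemma psc_add_left: "psc (c + d) f = psc c f + psc (d::'k::field) f"
  by (rule ext) (simp add: psc_def distrib_right)
lemma psc_diff: "psc c (f - g) = psc c f - psc (c::'k::field) g"
  by (rule ext) (simp add: psc_def right_diff_distrib)
lemma psc_minus_one: "psc (-1::'k::field) f = - f"
  by (rule ext) (simp add: psc_def)
lemma psc_psc: "psc (c::'k::field) (psc d f) = psc (c * d) f"
  by (rule ext) (simp add: psc_def)
lemma psc_zero_left [simp]: "psc (0::'k::field) f = 0"
  by (rule ext) (simp add: psc_def)
lemma psc_one [simp]: "psc (1::'k::field) f = f"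
  by (rule ext) (simp add: psc_def)
lemma psc_zero_right [simp]: "psc (c::'k::field) 0 = 0"
  by (rule ext) (simp add: psc_def)
lemma psc_sum: "psc (c::'k::field) (sum F A) = (\<Sum>i\<in>A. psc c (F i))"
  by (rule ext) (simp add: psc_def sum_fun_apply sum_distrib_left)
lemma psc_sum_left: "psc (sum c A) f = (\<Sum>a\<in>A. psc (c a) (f :: ('v,'e,'k::field) pa))"
  by (rule ext) (simp add: psc_def sum_fun_apply sum_distrib_right)

lemma finsupp_add: "f \<in> finsupp \<Longrightarrow> g \<in> finsupp \<Longrightarrow> f + g \<in> finsupp"
  unfolding finsupp_def supp_def mem_Collect_eq
  by (rule finite_subset[of _ "{p. f p \<noteq> 0} \<union> {p. g p \<noteq> 0}"]) auto
lemma finsupp_zero: "0 \<in> finsupp"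
  unfolding finsupp_def supp_def by simp
lemma finsupp_psc: "f \<in> finsupp \<Longrightarrow> psc c f \<in> finsupp"
  unfolding finsupp_def supp_def psc_def mem_Collect_eq
  by (rule finite_subset[of _ "{p. f p \<noteq> 0}"]) auto
lemma finsupp_uminus: "f \<in> finsupp \<Longrightarrow> - f \<in> finsupp"
  unfolding finsupp_def supp_def mem_Collect_eq by (simp add: fun_Compl_def)
lemma finsupp_sum: "(\<And>i. i \<in> A \<Longrightarrow> F i \<in> finsupp) \<Longrightarrow> sum F A \<in> finsupp"
  by (induction A rule: infinite_finite_induct) (auto simp: finsupp_zero finsupp_add)
lemma supp_delta: "supp (delta p :: _ \<Rightarrow> 'k::field) = {p}"
  by (auto simp: supp_def delta_def)
lemma finsupp_delta: "delta p \<in> finsupp"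
  by (simp add: finsupp_def supp_delta)
lemma finite_supp: "f \<in> finsupp \<Longrightarrow> finite (supp f)"
  by (simp add: finsupp_def)

lemma finsupp_expansion:
  assumes "f \<in> finsupp"
  shows "f = (\<Sum>p\<in>supp f. psc (f p) (delta p))"
proof (rule ext)
  fix x
  have "(\<Sum>p\<in>supp f. psc (f p) (delta p)) x = (\<Sum>p\<in>supp f. if p = x then f p else 0)"
    unfolding sum_fun_apply psc_def delta_def by (rule sum.cong) auto
  also have "\<dots> = f x" using assms by (simp add: finsupp_def supp_def)
  finally show "f x = (\<Sum>p\<in>supp f. psc (f p) (delta p)) x" by simp
qed

lemma pmult_eq_double_sum:
  fixes f g :: "('v,'e,'k::field) pa"
  assumes "finite A" "finite B" "supp f \<subseteq> A" "supp g \<subseteq> B"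
  shows "pmult tgt f g p = (\<Sum>q\<in>A. \<Sum>r\<in>B.
           if pend tgt q = fst r \<and> (fst q, snd q @ snd r) = p then f q * g r else 0)"
proof -
  let ?h = "\<lambda>(q,r). if pend tgt q = fst r \<and> (fst q, snd q @ snd r) = p then f q * g r else 0"
  have "(\<Sum>q\<in>A. \<Sum>r\<in>B. if pend tgt q = fst r \<and> (fst q, snd q @ snd r) = p then f q * g r else 0)
     = sum ?h (A \<times> B)" by (simp add: sum.cartesian_product)
  also have "\<dots> = sum ?h {(q, r). f q \<noteq> 0 \<and> g r \<noteq> 0 \<and> pend tgt q = fst r \<and> (fst q, snd q @ snd r) = p}"
    using assms by (intro sum.mono_neutral_right) (auto simp: supp_def split: if_splits)
  also have "\<dots> = pmult tgt f g p"
    unfolding pmult_def by (rule sum.cong) auto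
  finally show ?thesis by simp
qed

lemma pmult_delta_delta:
  "pmult tgt (delta a) (delta b :: ('v,'e,'k::field) pa) =
     (if pend tgt a = fst b then delta (fst a, snd a @ snd b) else 0)"
  by (rule ext, subst pmult_eq_double_sum[of "{a}" "{b}"])
     (simp_all add: supp_delta, auto simp: delta_def)

lemma pmult_add_left:
  fixes f g h :: "('v,'e,'k::field) pa"
  assumes "f \<in> finsupp" "g \<in> finsupp" "h \<in> finsupp"
  shows "pmult tgt (f + g) h = pmult tgt f h + pmult tgt g h"
proof (rule ext)
  fix p
  let ?A = "supp f \<union> supp g"
  have fin: "finite ?A" "finite (supp h)" using assms by (auto simp: finsupp_def)
  have s: "supp (f + g) \<subseteq> ?A" "supp f \<subseteq> ?A" "supp g \<subseteq> ?A" by (auto simp: supp_def)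
  show "pmult tgt (f + g) h p = (pmult tgt f h + pmult tgt g h) p"
    by (simp only: plus_fun_apply pmult_eq_double_sum[OF fin s(1) order.refl]
        pmult_eq_double_sum[OF fin s(2) order.refl] pmult_eq_double_sum[OF fin s(3) order.refl])
       (auto simp: sum.distrib[symmetric] distrib_right intro!: sum.cong)
qed

lemma pmult_add_right:
  fixes f g h :: "('v,'e,'k::field) pa"
  assumes "f \<in> finsupp" "g \<in> finsupp" "h \<in> finsupp"
  shows "pmult tgt h (f + g) = pmult tgt h f + pmult tgt h g"
proof (rule ext)
  fix p
  let ?A = "supp f \<union> supp g"
  have fin: "finite (supp h)" "finite ?A" using assms by (auto simp: finsupp_def)
  have s: "supp (f + g) \<subseteq> ?A" "supp f \<subseteq> ?A" "supp g \<subseteq> ?A" by (auto simp: supp_def)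
  show "pmult tgt h (f + g) p = (pmult tgt h f + pmult tgt h g) p"
    by (simp only: plus_fun_apply pmult_eq_double_sum[OF fin order.refl s(1)]
        pmult_eq_double_sum[OF fin order.refl s(2)] pmult_eq_double_sum[OF fin order.refl s(3)])
       (auto simp: sum.distrib[symmetric] distrib_left intro!: sum.cong)
qed

lemma pmult_psc_left:
  fixes f g :: "('v,'e,'k::field) pa"
  assumes "f \<in> finsupp" "g \<in> finsupp"
  shows "pmult tgt (psc c f) g = psc c (pmult tgt f g)"
proof (rule ext)
  fix p
  have fin: "finite (supp f)" "finite (supp g)" using assms by (auto simp: finsupp_def)
  have s: "supp (psc c f) \<subseteq> supp f" by (auto simp: supp_def psc_def)
  show "pmult tgt (psc c f) g p = psc c (pmult tgt f g) p"
    unfolding pmult_eq_double_sum[OF fin s order.refl]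
    by (simp add: psc_def pmult_eq_double_sum[OF fin order.refl order.refl] sum_distrib_left
        if_distrib mult.assoc cong: if_cong)
qed

lemma pmult_psc_right:
  fixes f g :: "('v,'e,'k::field) pa"
  assumes "f \<in> finsupp" "g \<in> finsupp"
  shows "pmult tgt f (psc c g) = psc c (pmult tgt f g)"
proof (rule ext)
  fix p
  have fin: "finite (supp f)" "finite (supp g)" using assms by (auto simp: finsupp_def)
  have s: "supp (psc c g) \<subseteq> supp g" by (auto simp: supp_def psc_def)
  show "pmult tgt f (psc c g) p = psc c (pmult tgt f g) p"
    unfolding pmult_eq_double_sum[OF fin order.refl s]
    by (simp add: psc_def pmult_eq_double_sum[OF fin order.refl order.refl] sum_distrib_left
        if_distrib mult.left_commute cong: if_cong)
qed

lemma pmult_zero_left [simp]: "pmult tgt 0 g = 0"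
  by (rule ext) (simp add: pmult_def)
lemma pmult_zero_right [simp]: "pmult tgt g 0 = 0"
  by (rule ext) (simp add: pmult_def)

lemma pmult_finsupp:
  fixes f g :: "('v,'e,'k::field) pa"
  assumes "f \<in> finsupp" "g \<in> finsupp"
  shows "pmult tgt f g \<in> finsupp"
proof -
  let ?cat = "\<lambda>(q, r). (fst q, snd q @ snd r)"
  have "supp (pmult tgt f g) \<subseteq> ?cat ` (supp f \<times> supp g)"
  proof
    fix p assume "p \<in> supp (pmult tgt f g)"
    then have "pmult tgt f g p \<noteq> 0" by (simp add: supp_def)
    then have "{(q, r). f q \<noteq> 0 \<and> g r \<noteq> 0 \<and> pend tgt q = fst r \<and> (fst q, snd q @ snd r) = p} \<noteq> {}"
      unfolding pmult_def by (rule contrapos_nn) (simp only: sum.empty)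
    then obtain q r where "f q \<noteq> 0" "g r \<noteq> 0" "(fst q, snd q @ snd r) = p" by blast
    then show "p \<in> ?cat ` (supp f \<times> supp g)" by (force simp: supp_def)
  qed
  moreover have "finite (?cat ` (supp f \<times> supp g))" using assms by (auto simp: finsupp_def)
  ultimately show ?thesis by (auto simp: finsupp_def intro: finite_subset)
qed

lemma pmult_sum_left:
  fixes g :: "('v,'e,'k::field) pa"
  assumes "finite A" "\<And>i. i \<in> A \<Longrightarrow> F i \<in> finsupp" "g \<in> finsupp"
  shows "pmult tgt (sum F A) g = (\<Sum>i\<in>A. pmult tgt (F i) g)"
  using assms by (induction A rule: finite_induct) (auto simp: pmult_add_left finsupp_sum)

lemma pmult_sum_right:
  fixes g :: "('v,'e,'k::field) pa"
  assumes "finite A" "\<And>i. i \<in> A \<Longrightarrow> F i \<in> finsupp" "g \<in> finsupp"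
  shows "pmult tgt g (sum F A) = (\<Sum>i\<in>A. pmult tgt g (F i))"
  using assms by (induction A rule: finite_induct) (auto simp: pmult_add_right finsupp_sum)

lemma pmult_lincomb_left:
  fixes g :: "('v,'e,'k::field) pa"
  assumes "finite A" "\<And>i. i \<in> A \<Longrightarrow> F i \<in> finsupp" "g \<in> finsupp"
  shows "pmult tgt (\<Sum>i\<in>A. psc (c i) (F i)) g = (\<Sum>i\<in>A. psc (c i) (pmult tgt (F i) g))"
  using assms by (simp add: pmult_sum_left finsupp_psc pmult_psc_left)

lemma pmult_lincomb_right:
  fixes g :: "('v,'e,'k::field) pa"
  assumes "finite A" "\<And>i. i \<in> A \<Longrightarrow> F i \<in> finsupp" "g \<in> finsupp"
  shows "pmult tgt g (\<Sum>i\<in>A. psc (c i) (F i)) = (\<Sum>i\<in>A. psc (c i) (pmult tgt g (F i)))"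
  using assms by (simp add: pmult_sum_right finsupp_psc pmult_psc_right)

lemma pmult_expand_left:
  fixes f g :: "('v,'e,'k::field) pa"
  assumes "f \<in> finsupp" "g \<in> finsupp"
  shows "pmult tgt f g = (\<Sum>a\<in>supp f. psc (f a) (pmult tgt (delta a) g))"
proof -
  have "pmult tgt f g = pmult tgt (\<Sum>a\<in>supp f. psc (f a) (delta a)) g"
    using finsupp_expansion[OF assms(1)] by (rule arg_cong)
  then show ?thesis using assms by (simp add: pmult_lincomb_left finsupp_delta finite_supp)
qed

lemma pmult_expand_right:
  fixes f g :: "('v,'e,'k::field) pa"
  assumes "f \<in> finsupp" "g \<in> finsupp"
  shows "pmult tgt g f = (\<Sum>a\<in>supp f. psc (f a) (pmult tgt g (delta a)))"
proof -
  have "pmult tgt g f = pmult tgt g (\<Sum>a\<in>supp f. psc (f a) (delta a))"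
    using finsupp_expansion[OF assms(1)] by (rule arg_cong)
  then show ?thesis using assms by (simp add: pmult_lincomb_right finsupp_delta finite_supp)
qed

lemma pend_append: "pend tgt (v, xs @ ys) = pend tgt (pend tgt (v, xs), ys)"
  by (cases ys) (auto simp: pend_def)

lemma pmult_assoc_delta:
  "pmult tgt (pmult tgt (delta a) (delta b)) (delta c :: ('v,'e,'k::field) pa)
   = pmult tgt (delta a) (pmult tgt (delta b) (delta c))"
  by (auto simp: pmult_delta_delta pend_append)

lemma pmult_assoc:
  fixes f g h :: "('v,'e,'k::field) pa"
  assumes f: "f \<in> finsupp" and g: "g \<in> finsupp" and h: "h \<in> finsupp"
  shows "pmult tgt (pmult tgt f g) h = pmult tgt f (pmult tgt g h)"
proof -
  note fs = finite_supp finsupp_delta pmult_finsupp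
  have ddh: "pmult tgt (pmult tgt (delta a) (delta b)) h = pmult tgt (delta a) (pmult tgt (delta b) h)"
    for a b
  proof -
    have "pmult tgt (pmult tgt (delta a) (delta b)) h
        = (\<Sum>c\<in>supp h. psc (h c) (pmult tgt (pmult tgt (delta a) (delta b)) (delta c)))"
      by (rule pmult_expand_right[OF h]) (simp add: fs)
    also have "\<dots> = pmult tgt (delta a) (\<Sum>c\<in>supp h. psc (h c) (pmult tgt (delta b) (delta c)))"
      using h by (subst pmult_lincomb_right) (auto simp: fs pmult_assoc_delta)
    also have "\<dots> = pmult tgt (delta a) (pmult tgt (delta b) h)"
      by (simp only: pmult_expand_right[OF h finsupp_delta])
    finally show ?thesis .
  qed
  have dgh: "pmult tgt (pmult tgt (delta a) g) h = pmult tgt (delta a) (pmult tgt g h)" for a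
  proof -
    have "pmult tgt (pmult tgt (delta a) g) h
        = pmult tgt (\<Sum>b\<in>supp g. psc (g b) (pmult tgt (delta a) (delta b))) h"
      by (simp only: pmult_expand_right[OF g finsupp_delta])
    also have "\<dots> = (\<Sum>b\<in>supp g. psc (g b) (pmult tgt (pmult tgt (delta a) (delta b)) h))"
      using g h by (intro pmult_lincomb_left) (auto simp: fs)
    also have "\<dots> = pmult tgt (delta a) (\<Sum>b\<in>supp g. psc (g b) (pmult tgt (delta b) h))"
      unfolding ddh using g h by (intro pmult_lincomb_right[symmetric]) (auto simp: fs)
    also have "\<dots> = pmult tgt (delta a) (pmult tgt g h)"
      by (simp only: pmult_expand_left[OF g h])
    finally show ?thesis .
  qed
  have "pmult tgt (pmult tgt f g) h
      = pmult tgt (\<Sum>a\<in>supp f. psc (f a) (pmult tgt (delta a) g)) h"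
    by (simp only: pmult_expand_left[OF f g])
  also have "\<dots> = (\<Sum>a\<in>supp f. psc (f a) (pmult tgt (delta a) (pmult tgt g h)))"
    unfolding dgh[symmetric] using f g h by (intro pmult_lincomb_left) (auto simp: fs)
  also have "\<dots> = pmult tgt f (pmult tgt g h)"
    using f g h by (simp only: pmult_expand_left[OF f pmult_finsupp[OF g h]])
  finally show ?thesis .
qed

lemma is_path_nil: "is_path V E src tgt (v, []) \<longleftrightarrow> v \<in> V"
  by (simp add: is_path_def)

lemma chain_Cons:
  "(\<forall>i. Suc i < length (x # xs) \<longrightarrow> R ((x # xs) ! i) ((x # xs) ! Suc i)) \<longleftrightarrow>
   (xs \<noteq> [] \<longrightarrow> R x (hd xs)) \<and> (\<forall>i. Suc i < length xs \<longrightarrow> R (xs ! i) (xs ! Suc i))"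
  by (cases xs) (auto simp: less_Suc_eq_0_disj)

lemma is_path_cons:
  assumes "\<forall>e\<in>E. tgt e \<in> V"
  shows "is_path V E src tgt (v, e # es) \<longleftrightarrow>
    v \<in> V \<and> e \<in> E \<and> src e = v \<and> is_path V E src tgt (tgt e, es)"
  unfolding is_path_def fst_conv snd_conv chain_Cons[where R="\<lambda>a b. tgt a = src b"]
  using assms by (cases es) auto

section \<open>Substituting a path for an arrow\<close>

text \<open>\<open>subst_op r ss\<close> is the derivation of the path algebra that replaces one occurrence of the
  arrow \<open>r\<close> by the path \<open>ss\<close>, summed over all occurrences.\<close>

definition arrow_positions :: "'e \<Rightarrow> 'e list \<Rightarrow> nat set" where
  "arrow_positions r xs = {i. i < length xs \<and> xs ! i = r}"
definition replace_at :: "'e list \<Rightarrow> 'e list \<Rightarrow> nat \<Rightarrow> 'e list" where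
  "replace_at ss xs i = take i xs @ ss @ drop (Suc i) xs"
definition subst_paths :: "'e \<Rightarrow> 'e list \<Rightarrow> ('v,'e) path \<Rightarrow> ('v,'e,'k::field) pa" where
  "subst_paths r ss p = (\<Sum>i\<in>arrow_positions r (snd p). delta (fst p, replace_at ss (snd p) i))"
definition subst_op :: "'e \<Rightarrow> 'e list \<Rightarrow> ('v,'e,'k::field) pa \<Rightarrow> ('v,'e,'k) pa" where
  "subst_op r ss f = (\<Sum>a\<in>supp f. psc (f a) (subst_paths r ss a))"

lemma finite_arrow_positions: "finite (arrow_positions r xs)"
  by (simp add: arrow_positions_def)

lemma arrow_positions_append:
  "arrow_positions r (xs @ ys) = arrow_positions r xs \<union> (\<lambda>j. length xs + j) ` arrow_positions r ys"
proof (rule set_eqI)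
  fix i
  show "i \<in> arrow_positions r (xs @ ys)
      \<longleftrightarrow> i \<in> arrow_positions r xs \<union> (\<lambda>j. length xs + j) ` arrow_positions r ys"
  proof (cases "i < length xs")
    case True
    then show ?thesis by (auto simp: arrow_positions_def nth_append)
  next
    case False
    then obtain j where "i = length xs + j" by (metis le_Suc_ex not_less)
    then show ?thesis by (auto simp: arrow_positions_def nth_append)
  qed
qed

lemma replace_at_append_left:
  "i < length xs \<Longrightarrow> replace_at ss (xs @ ys) i = replace_at ss xs i @ ys"
  by (simp add: replace_at_def)
lemma replace_at_append_right: "replace_at ss (xs @ ys) (length xs + j) = xs @ replace_at ss ys j"
  by (simp add: replace_at_def)

lemma subst_paths_finsupp: "subst_paths r ss p \<in> finsupp"
  unfolding subst_paths_def by (intro finsupp_sum finsupp_delta)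

lemma subst_op_eq_sum:
  assumes "finite A" "supp f \<subseteq> A"
  shows "subst_op r ss f = (\<Sum>a\<in>A. psc (f a) (subst_paths r ss a))"
  unfolding subst_op_def using assms
  by (intro sum.mono_neutral_left) (auto simp: supp_def)

lemma subst_op_finsupp: "subst_op r ss f \<in> finsupp"
  unfolding subst_op_def by (intro finsupp_sum finsupp_psc subst_paths_finsupp)

lemma subst_op_add:
  assumes "f \<in> finsupp" "g \<in> finsupp"
  shows "subst_op r ss (f + g) = subst_op r ss f + subst_op r ss g"
proof -
  let ?A = "supp f \<union> supp g"
  have fin: "finite ?A" using assms by (simp add: finsupp_def)
  have s: "supp (f + g) \<subseteq> ?A" "supp f \<subseteq> ?A" "supp g \<subseteq> ?A" by (auto simp: supp_def)
  show ?thesis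
    unfolding subst_op_eq_sum[OF fin s(1)] subst_op_eq_sum[OF fin s(2)] subst_op_eq_sum[OF fin s(3)]
    by (simp add: psc_add_left sum.distrib)
qed

lemma subst_op_psc:
  assumes "f \<in> finsupp"
  shows "subst_op r ss (psc c f) = psc c (subst_op r ss f)"
proof -
  have fin: "finite (supp f)" using assms by (simp add: finsupp_def)
  have s: "supp (psc c f) \<subseteq> supp f" by (auto simp: supp_def psc_def)
  have "subst_op r ss (psc c f) = (\<Sum>a\<in>supp f. psc (psc c f a) (subst_paths r ss a))"
    by (rule subst_op_eq_sum[OF fin s])
  also have "\<dots> = psc c (subst_op r ss f)"
    unfolding subst_op_def psc_sum psc_psc by (simp add: psc_def[of c f])
  finally show ?thesis .
qed

lemma subst_op_zero: "subst_op r ss 0 = 0"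
  by (simp add: subst_op_def supp_def)

lemma subst_op_delta: "subst_op r ss (delta p) = subst_paths r ss p"
  by (simp add: subst_op_def supp_delta) (simp add: delta_def)

lemma subst_op_sum:
  "finite A \<Longrightarrow> (\<And>i. i \<in> A \<Longrightarrow> F i \<in> finsupp)
    \<Longrightarrow> subst_op r ss (sum F A) = (\<Sum>i\<in>A. subst_op r ss (F i))"
  by (induction A rule: finite_induct) (auto simp: subst_op_zero subst_op_add finsupp_sum)

lemma subst_op_lincomb: "finite A \<Longrightarrow> (\<And>i. i \<in> A \<Longrightarrow> F i \<in> finsupp) \<Longrightarrow>
    subst_op r ss (\<Sum>i\<in>A. psc (c i) (F i)) = (\<Sum>i\<in>A. psc (c i) (subst_op r ss (F i)))"
  by (simp add: subst_op_sum finsupp_psc subst_op_psc)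

locale quiver_quotient =
  fixes V :: "'v set" and E :: "'e set" and src tgt :: "'e \<Rightarrow> 'v"
    and I :: "('v,'e,'k::field) pa set" and Qb :: "('v,'e,'k) pa set set"
  assumes finV: "finite V" and finE: "finite E" and st: "\<forall>e\<in>E. src e \<in> V \<and> tgt e \<in> V"
    and idl: "is_ideal V E src tgt I"
    and qb: "is_quot_basis V E src tgt I Qb"
    and qpath: "\<forall>q\<in>Qb. \<exists>p. is_path V E src tgt p \<and> q = cls I (delta p)"
begin

abbreviation P :: "('v,'e,'k) pa set" where "P \<equiv> PA V E src tgt"
abbreviation "path \<equiv> is_path V E src tgt"
abbreviation mul :: "('v,'e,'k) pa \<Rightarrow> ('v,'e,'k) pa \<Rightarrow> ('v,'e,'k) pa" where "mul \<equiv> pmult tgt"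
abbreviation vtx :: "'v \<Rightarrow> ('v,'e,'k) pa" where "vtx v \<equiv> delta (v, [])"
abbreviation arr :: "'e \<Rightarrow> ('v,'e,'k) pa" where "arr e \<equiv> delta (src e, [e])"

lemma path_cons: "path (v, e # es) \<longleftrightarrow> v \<in> V \<and> e \<in> E \<and> src e = v \<and> path (tgt e, es)"
  using is_path_cons[of E tgt V] st by blast

lemma path_fst: "path p \<Longrightarrow> fst p \<in> V" by (simp add: is_path_def)

lemma pend_cons: "pend tgt (v, e # es) = pend tgt (tgt e, es)"
  by (simp add: pend_def)

lemma path_append: "path (v, xs @ ys) \<longleftrightarrow> path (v, xs) \<and> path (pend tgt (v, xs), ys)"
proof (induction xs arbitrary: v)
  case Nil
  then show ?case by (auto simp: is_path_nil pend_def dest: path_fst)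
next
  case (Cons x xs)
  show ?case by (simp only: append_Cons path_cons Cons pend_cons) blast
qed

lemma path_pend: "path p \<Longrightarrow> pend tgt p \<in> V"
  using path_append[of "fst p" "snd p" "[]"] by (simp add: is_path_nil)

lemma P_finsupp: "f \<in> P \<Longrightarrow> f \<in> finsupp"
  by (simp add: PA_def finsupp_def supp_def)

lemma P_supp_path: "f \<in> P \<Longrightarrow> a \<in> supp f \<Longrightarrow> path a"
  by (cases a) (simp add: PA_def supp_def)

lemma P_iff: "f \<in> P \<longleftrightarrow> f \<in> finsupp \<and> (\<forall>a\<in>supp f. path a)"
  by (auto simp: PA_def finsupp_def supp_def)

lemma P_add: "f \<in> P \<Longrightarrow> g \<in> P \<Longrightarrow> f + g \<in> P"
  unfolding P_iff by (auto simp: finsupp_add supp_def) (metis add.left_neutral)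
lemma P_zero: "0 \<in> P"
  unfolding P_iff by (auto simp: finsupp_zero supp_def)
lemma P_psc: "f \<in> P \<Longrightarrow> psc c f \<in> P"
  using finsupp_psc[of f c] unfolding P_iff by (auto simp: supp_def psc_def)
lemma P_uminus: "f \<in> P \<Longrightarrow> - f \<in> P"
  unfolding P_iff by (auto simp: finsupp_uminus supp_def)
lemma P_diff: "f \<in> P \<Longrightarrow> g \<in> P \<Longrightarrow> f - g \<in> P"
  using P_add[of f "- g"] P_uminus[of g] by simp
lemma P_sum: "(\<And>i. i \<in> A \<Longrightarrow> F i \<in> P) \<Longrightarrow> sum F A \<in> P"
  by (induction A rule: infinite_finite_induct) (auto simp: P_zero P_add)
lemma delta_P: "path p \<Longrightarrow> delta p \<in> P"
  unfolding P_iff by (simp add: finsupp_delta supp_delta)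

lemma mul_delta_P: "path a \<Longrightarrow> path b \<Longrightarrow> mul (delta a) (delta b) \<in> P"
  by (cases a; cases b) (auto simp: pmult_delta_delta P_zero intro!: delta_P simp: path_append)

lemma P_mul:
  assumes "f \<in> P" "g \<in> P"
  shows "mul f g \<in> P"
proof -
  have "mul f g = (\<Sum>a\<in>supp f. psc (f a) (mul (delta a) g))"
    using assms by (simp add: pmult_expand_left P_finsupp)
  also have "\<dots> = (\<Sum>a\<in>supp f. psc (f a) (\<Sum>b\<in>supp g. psc (g b) (mul (delta a) (delta b))))"
    using assms by (simp add: pmult_expand_right P_finsupp finsupp_delta)
  also have "\<dots> \<in> P"
    by (auto intro!: P_sum P_psc mul_delta_P intro: P_supp_path[OF assms(1)] P_supp_path[OF assms(2)])
  finally show ?thesis .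
qed

lemma mul_add_left: "f \<in> P \<Longrightarrow> g \<in> P \<Longrightarrow> h \<in> P \<Longrightarrow> mul (f + g) h = mul f h + mul g h"
  by (simp add: pmult_add_left P_finsupp)
lemma mul_add_right: "f \<in> P \<Longrightarrow> g \<in> P \<Longrightarrow> h \<in> P \<Longrightarrow> mul h (f + g) = mul h f + mul h g"
  by (simp add: pmult_add_right P_finsupp)
lemma mul_psc_left: "f \<in> P \<Longrightarrow> g \<in> P \<Longrightarrow> mul (psc c f) g = psc c (mul f g)"
  by (simp add: pmult_psc_left P_finsupp)
lemma mul_psc_right: "f \<in> P \<Longrightarrow> g \<in> P \<Longrightarrow> mul f (psc c g) = psc c (mul f g)"
  by (simp add: pmult_psc_right P_finsupp)
lemma mul_uminus_left: "f \<in> P \<Longrightarrow> g \<in> P \<Longrightarrow> mul (- f) g = - mul f g"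
  using mul_psc_left[of f g "-1"] by (simp add: psc_minus_one)
lemma mul_uminus_right: "f \<in> P \<Longrightarrow> g \<in> P \<Longrightarrow> mul f (- g) = - mul f g"
  using mul_psc_right[of f g "-1"] by (simp add: psc_minus_one)
lemma mul_diff_left: "f \<in> P \<Longrightarrow> g \<in> P \<Longrightarrow> h \<in> P \<Longrightarrow> mul (f - g) h = mul f h - mul g h"
  using mul_add_left[of f "- g" h] by (simp add: P_uminus mul_uminus_left)
lemma mul_diff_right: "f \<in> P \<Longrightarrow> g \<in> P \<Longrightarrow> h \<in> P \<Longrightarrow> mul h (f - g) = mul h f - mul h g"
  using mul_add_right[of f "- g" h] by (simp add: P_uminus mul_uminus_right)
lemma mul_assoc: "f \<in> P \<Longrightarrow> g \<in> P \<Longrightarrow> h \<in> P \<Longrightarrow> mul (mul f g) h = mul f (mul g h)"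
  by (simp add: pmult_assoc P_finsupp)
lemma mul_sum_left:
  "finite A \<Longrightarrow> (\<And>i. i \<in> A \<Longrightarrow> F i \<in> P) \<Longrightarrow> g \<in> P \<Longrightarrow> mul (sum F A) g = (\<Sum>i\<in>A. mul (F i) g)"
  by (simp add: pmult_sum_left P_finsupp)
lemma mul_sum_right:
  "finite A \<Longrightarrow> (\<And>i. i \<in> A \<Longrightarrow> F i \<in> P) \<Longrightarrow> g \<in> P \<Longrightarrow> mul g (sum F A) = (\<Sum>i\<in>A. mul g (F i))"
  by (simp add: pmult_sum_right P_finsupp)

lemma I_P: "I \<subseteq> P" using idl by (simp add: is_ideal_def)
lemma I_zero: "0 \<in> I" using idl by (simp add: is_ideal_def zero_fun_def)
lemma I_add: "i \<in> I \<Longrightarrow> j \<in> I \<Longrightarrow> i + j \<in> I" using idl by (simp add: is_ideal_def padd_eq_plus)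
lemma I_psc: "i \<in> I \<Longrightarrow> psc c i \<in> I" using idl by (simp add: is_ideal_def)
lemma I_mul_left: "x \<in> P \<Longrightarrow> i \<in> I \<Longrightarrow> mul x i \<in> I" using idl by (simp add: is_ideal_def)
lemma I_mul_right: "x \<in> P \<Longrightarrow> i \<in> I \<Longrightarrow> mul i x \<in> I" using idl by (simp add: is_ideal_def)
lemma I_uminus: "i \<in> I \<Longrightarrow> - i \<in> I" using I_psc[of i "-1"] by (simp add: psc_minus_one)
lemma I_diff: "i \<in> I \<Longrightarrow> j \<in> I \<Longrightarrow> i - j \<in> I" using I_add[of i "- j"] I_uminus[of j] by simp
lemma I_sum: "(\<And>a. a \<in> A \<Longrightarrow> F a \<in> I) \<Longrightarrow> sum F A \<in> I"
  by (induction A rule: infinite_finite_induct) (auto simp: I_zero I_add)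

abbreviation "cl \<equiv> cls I"

lemma cls_alt: "cl x = {x + i | i. i \<in> I}" by (simp add: cls_def padd_eq_plus)

lemma in_cls: "x \<in> cl x" unfolding cls_alt using I_zero by force

lemma cls_eq: "cl x = cl y \<longleftrightarrow> x - y \<in> I"
proof
  assume "cl x = cl y"
  then obtain i where "i \<in> I" "x = y + i" using in_cls[of x] unfolding cls_alt by auto
  thus "x - y \<in> I" by simp
next
  assume h: "x - y \<in> I"
  show "cl x = cl y"
  proof (unfold cls_alt, safe)
    fix i assume "i \<in> I"
    thus "\<exists>j. x + i = y + j \<and> j \<in> I" using h by (intro exI[of _ "(x - y) + i"]) (auto intro: I_add)
  next
    fix i assume "i \<in> I"
    thus "\<exists>j. y + i = x + j \<and> j \<in> I" using h I_uminus[OF h]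
      by (intro exI[of _ "(y - x) + i"]) (auto intro: I_add)
  qed
qed

lemma cls_zero: "cl 0 = I" unfolding cls_alt by auto

lemma cls_eq_I: "cl x = I \<longleftrightarrow> x \<in> I"
  using cls_eq[of x 0] by (simp add: cls_zero)

lemma in_cls_iff: "z \<in> cl y \<longleftrightarrow> z - y \<in> I"
  unfolding cls_alt by (auto simp: algebra_simps) (metis diff_add_cancel)

lemma qadd_cls: "qadd (cl x) (cl y) = cl (x + y)"
proof (rule set_eqI)
  fix z
  have "z \<in> qadd (cl x) (cl y) \<longleftrightarrow> (\<exists>a b. z = a + b \<and> a - x \<in> I \<and> b - y \<in> I)"
    by (auto simp: qadd_def padd_eq_plus in_cls_iff)
  also have "\<dots> \<longleftrightarrow> z - (x + y) \<in> I"
  proof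
    assume "\<exists>a b. z = a + b \<and> a - x \<in> I \<and> b - y \<in> I"
    then obtain a b where "z = a + b" "a - x \<in> I" "b - y \<in> I" by blast
    moreover have e: "z - (x + y) = (a - x) + (b - y)"
      using \<open>z = a + b\<close> by (simp add: algebra_simps)
    ultimately show "z - (x + y) \<in> I" unfolding e by (intro I_add)
  next
    assume "z - (x + y) \<in> I"
    thus "\<exists>a b. z = a + b \<and> a - x \<in> I \<and> b - y \<in> I"
      using I_zero by (intro exI[of _ "z - y"] exI[of _ y]) (auto simp: algebra_simps)
  qed
  finally show "z \<in> qadd (cl x) (cl y) \<longleftrightarrow> z \<in> cl (x + y)" by (simp add: in_cls_iff)
qed

lemma qscale_cls: "qscale I c (cl x) = cl (psc c x)"
proof (rule set_eqI)
  fix z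
  have "z \<in> qscale I c (cl x) \<longleftrightarrow> (\<exists>a i. z = psc c a + i \<and> a - x \<in> I \<and> i \<in> I)"
    by (auto simp: qscale_def padd_eq_plus in_cls_iff)
  also have "\<dots> \<longleftrightarrow> z - psc c x \<in> I"
  proof
    assume "\<exists>a i. z = psc c a + i \<and> a - x \<in> I \<and> i \<in> I"
    then obtain a i where "z = psc c a + i" "a - x \<in> I" "i \<in> I" by blast
    moreover have e: "z - psc c x = psc c (a - x) + i"
      using \<open>z = psc c a + i\<close> by (simp add: psc_diff algebra_simps)
    ultimately show "z - psc c x \<in> I" unfolding e by (intro I_add I_psc)
  next
    assume "z - psc c x \<in> I"
    thus "\<exists>a i. z = psc c a + i \<and> a - x \<in> I \<and> i \<in> I"
      using I_zero by (intro exI[of _ x] exI[of _ "z - psc c x"]) (auto simp: algebra_simps)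
  qed
  finally show "z \<in> qscale I c (cl x) \<longleftrightarrow> z \<in> cl (psc c x)" by (simp add: in_cls_iff)
qed

lemma qmult_cls:
  assumes "x \<in> P" "y \<in> P"
  shows "qmult tgt I (cl x) (cl y) = cl (mul x y)"
proof (rule set_eqI)
  fix z
  have "z \<in> qmult tgt I (cl x) (cl y) \<longleftrightarrow> (\<exists>a b k. z = mul a b + k \<and> a - x \<in> I \<and> b - y \<in> I \<and> k \<in> I)"
    by (auto simp: qmult_def padd_eq_plus in_cls_iff)
  also have "\<dots> \<longleftrightarrow> z - mul x y \<in> I"
  proof
    assume "\<exists>a b k. z = mul a b + k \<and> a - x \<in> I \<and> b - y \<in> I \<and> k \<in> I"
    then obtain a b k where z: "z = mul a b + k" and ijk: "a - x \<in> I" "b - y \<in> I" "k \<in> I" by blast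
    define i where "i = a - x"
    define j where "j = b - y"
    have a: "a = x + i" and b: "b = y + j" by (simp_all add: i_def j_def)
    have ij: "i \<in> I" "j \<in> I" using ijk by (simp_all add: i_def j_def)
    then have PP: "i \<in> P" "j \<in> P" using I_P by auto
    have "z - mul x y = mul i y + mul x j + mul i j + k"
      using assms PP unfolding z a b by (simp add: mul_add_left mul_add_right P_add algebra_simps)
    moreover have "mul i y + mul x j + mul i j + k \<in> I"
      using ij ijk assms PP by (intro I_add I_mul_left I_mul_right) auto
    ultimately show "z - mul x y \<in> I" by simp
  next
    assume "z - mul x y \<in> I"
    thus "\<exists>a b k. z = mul a b + k \<and> a - x \<in> I \<and> b - y \<in> I \<and> k \<in> I"
      using I_zero by (intro exI[of _ x] exI[of _ y] exI[of _ "z - mul x y"]) auto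
  qed
  finally show "z \<in> qmult tgt I (cl x) (cl y) \<longleftrightarrow> z \<in> cl (mul x y)" by (simp add: in_cls_iff)
qed

lemma qsum_cls:
  assumes "finite S"
  shows "qsum I S (\<lambda>j. cl (F j)) = cl (\<Sum>j\<in>S. F j)"
  unfolding qsum_def padd_eq_plus
proof safe
  fix f i assume f: "\<forall>j\<in>S. f j \<in> cl (F j)" and i: "i \<in> I"
  have "(\<lambda>p. \<Sum>j\<in>S. f j p) = (\<Sum>j\<in>S. f j)" by (rule ext) (simp add: sum_fun_apply)
  also have "\<dots> = (\<Sum>j\<in>S. F j) + (\<Sum>j\<in>S. f j - F j)" by (simp add: sum_subtractf)
  finally have "(\<lambda>p. \<Sum>j\<in>S. f j p) + i = (\<Sum>j\<in>S. F j) + ((\<Sum>j\<in>S. f j - F j) + i)" by simp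
  moreover have "(\<Sum>j\<in>S. f j - F j) + i \<in> I"
    using f i by (intro I_add I_sum) (auto simp: in_cls_iff)
  ultimately show "(\<lambda>p. \<Sum>j\<in>S. f j p) + i \<in> cl (sum F S)" unfolding cls_alt by blast
next
  fix x assume "x \<in> cl (sum F S)"
  then obtain i where "i \<in> I" "x = sum F S + i" unfolding cls_alt by blast
  moreover have "(\<lambda>p. \<Sum>j\<in>S. F j p) = (\<Sum>j\<in>S. F j)" by (rule ext) (simp add: sum_fun_apply)
  ultimately show "\<exists>f i. x = (\<lambda>p. \<Sum>j\<in>S. f j p) + i \<and> (\<forall>j\<in>S. f j \<in> cl (F j)) \<and> i \<in> I"
    by (intro exI[of _ F] exI[of _ i]) (auto simp: in_cls)
qed

lemma qsum_cong:
  assumes "\<And>j. j \<in> S \<Longrightarrow> A j = B j"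
  shows "qsum I S A = qsum I S B"
proof -
  have "(\<forall>j\<in>S. f j \<in> A j) = (\<forall>j\<in>S. f j \<in> B j)" for f using assms by auto
  thus ?thesis unfolding qsum_def by simp
qed

abbreviation Qcar' where "Qcar' \<equiv> Qcar V E src tgt I"
abbreviation "qt' \<equiv> qt V E src tgt I"
abbreviation "qh' \<equiv> qh V E src tgt I"

lemma Qcar_iff: "A \<in> Qcar' \<longleftrightarrow> (\<exists>x\<in>P. A = cl x)"
  by (auto simp: Qcar_def)

lemma I_Qcar: "I \<in> Qcar'"
  using P_zero cls_zero unfolding Qcar_iff by metis

definition repr where "repr A = (SOME x. x \<in> P \<and> cl x = A)"

lemma repr:
  assumes "A \<in> Qcar'"
  shows "repr A \<in> P" "cl (repr A) = A"
proof -
  have ex: "\<exists>x. x \<in> P \<and> cl x = A" using assms unfolding Qcar_iff by metis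
  show "repr A \<in> P" "cl (repr A) = A" using someI_ex[OF ex] unfolding repr_def by auto
qed

lemma repr_I: "repr I \<in> I"
  using repr(2)[OF I_Qcar] cls_eq_I by blast

lemma repr_cls: "x \<in> P \<Longrightarrow> cl (repr (cl x)) = cl x"
  using repr(2) Qcar_iff by blast

definition brep where "brep q = delta (qrep V E src tgt I q)"

lemma qrep_path_cls: assumes "q \<in> Qb" shows "path (qrep V E src tgt I q)" "cl (brep q) = q"
proof -
  obtain p where "path p" "q = cl (delta p)" using qpath assms by blast
  then have ex: "\<exists>p. path p \<and> cls I (delta p) = q" by blast
  show "path (qrep V E src tgt I q)" "cl (brep q) = q"
    using someI_ex[OF ex] unfolding qrep_def brep_def by auto
qed

lemma brep_P: "q \<in> Qb \<Longrightarrow> brep q \<in> P"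
  unfolding brep_def by (intro delta_P qrep_path_cls)

lemma qh_V: "s \<in> Qb \<Longrightarrow> qh' s \<in> V"
  unfolding qh_def using qrep_path_cls(1) path_pend by blast

lemma qsum_basis_cls:
  assumes "finite S" "S \<subseteq> Qb"
  shows "qsum I S (\<lambda>q. qscale I (c q) q) = cl (\<Sum>q\<in>S. psc (c q) (brep q))"
proof -
  have "qsum I S (\<lambda>q. qscale I (c q) q) = qsum I S (\<lambda>q. cl (psc (c q) (brep q)))"
  proof (rule qsum_cong)
    fix q assume "q \<in> S"
    then have "q = cl (brep q)" using assms(2) qrep_path_cls(2) by auto
    then show "qscale I (c q) q = cl (psc (c q) (brep q))" by (metis qscale_cls)
  qed
  also have "\<dots> = cl (\<Sum>q\<in>S. psc (c q) (brep q))" using assms(1) by (rule qsum_cls)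
  finally show ?thesis .
qed

lemma quot_basis_span:
  assumes "x \<in> P"
  shows "\<exists>S a. finite S \<and> S \<subseteq> Qb \<and> x - (\<Sum>q\<in>S. psc (a q) (brep q)) \<in> I"
proof -
  have "cl x \<in> Qcar'" using assms unfolding Qcar_iff by blast
  moreover have "\<forall>A\<in>Qcar'. \<exists>S c. finite S \<and> S \<subseteq> Qb \<and> A = qsum I S (\<lambda>q. qscale I (c q) q)"
    using qb unfolding is_quot_basis_def by (elim conjE)
  ultimately obtain S c where S: "finite S" "S \<subseteq> Qb" "cl x = qsum I S (\<lambda>q. qscale I (c q) q)"
    by (elim ballE exE conjE) auto
  then have "cl x = cl (\<Sum>q\<in>S. psc (c q) (brep q))" by (simp only: qsum_basis_cls)
  then have "x - (\<Sum>q\<in>S. psc (c q) (brep q)) \<in> I" by (simp only: cls_eq)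
  then show ?thesis using S(1,2) by blast
qed

lemma quot_basis_indep:
  assumes "finite S" "S \<subseteq> Qb" "(\<Sum>q\<in>S. psc (a q) (brep q)) \<in> I" "q \<in> S"
  shows "a q = 0"
proof -
  have "qsum I S (\<lambda>q. qscale I (a q) q) = I"
    using assms(3) by (simp only: qsum_basis_cls[OF assms(1,2)] cls_eq_I)
  moreover have "\<forall>S c. finite S \<and> S \<subseteq> Qb \<and> qsum I S (\<lambda>q. qscale I (c q) q) = I \<longrightarrow> (\<forall>q\<in>S. c q = 0)"
    using qb unfolding is_quot_basis_def by (elim conjE)
  ultimately show ?thesis using assms(1,2,4) by blast
qed

lemma quot_basis_indep_inj:
  assumes T: "finite T" "inj_on g T" "g ` T \<subseteq> Qb"
    and s: "(\<Sum>F\<in>T. psc (k F) (brep (g F))) \<in> I" and F: "F \<in> T"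
  shows "k F = 0"
proof -
  let ?h = "the_inv_into T g"
  have "(\<Sum>q\<in>g ` T. psc (k (?h q)) (brep q)) = (\<Sum>F\<in>T. psc (k (?h (g F))) (brep (g F)))"
    using T(2) by (simp add: sum.reindex)
  also have "\<dots> = (\<Sum>F\<in>T. psc (k F) (brep (g F)))"
    using T(2) by (intro sum.cong refl) (simp add: the_inv_into_f_f)
  finally have "k (?h (g F)) = 0"
    using T F s by (intro quot_basis_indep[of "g ` T"]) auto
  then show ?thesis using T(2) F by (simp add: the_inv_into_f_f)
qed

lemma mul_delta_vtx: "mul (delta p) (vtx v) = (if pend tgt p = v then delta p else 0)"
  by (simp add: pmult_delta_delta)
lemma mul_vtx_delta: "mul (vtx v) (delta p) = (if v = fst p then delta p else 0)"
  by (simp add: pmult_delta_delta pend_def)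

lemma brep_mul_vtx: "mul (brep q) (vtx v) = (if qh' q = v then brep q else 0)"
  by (simp add: brep_def qh_def mul_delta_vtx)
lemma vtx_mul_brep: "mul (vtx v) (brep q) = (if qt' q = v then brep q else 0)"
  by (simp add: brep_def qt_def mul_vtx_delta)

abbreviation Diff' where "Diff' \<equiv> Diff V E src tgt I"

lemma DiffD: assumes "D \<in> Diff'"
  shows "x \<in> P \<Longrightarrow> D x \<in> Qcar'" "x \<notin> P \<Longrightarrow> D x = I"
    "x \<in> P \<Longrightarrow> y \<in> P \<Longrightarrow> D (x + y) = qadd (D x) (D y)"
    "x \<in> P \<Longrightarrow> D (psc c x) = qscale I c (D x)"
    "x \<in> P \<Longrightarrow> y \<in> P \<Longrightarrow> D (mul x y) = qadd (qmult tgt I (D x) (cl y)) (qmult tgt I (cl x) (D y))"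
  using assms unfolding Diff_def padd_eq_plus by auto

lemma DiffI:
  assumes "\<And>x. x \<in> P \<Longrightarrow> D x \<in> Qcar'" "\<And>x. x \<notin> P \<Longrightarrow> D x = I"
    "\<And>x y. x \<in> P \<Longrightarrow> y \<in> P \<Longrightarrow> D (x + y) = qadd (D x) (D y)"
    "\<And>x c. x \<in> P \<Longrightarrow> D (psc c x) = qscale I c (D x)"
    "\<And>x y. x \<in> P \<Longrightarrow> y \<in> P \<Longrightarrow> D (mul x y) = qadd (qmult tgt I (D x) (cl y)) (qmult tgt I (cl x) (D y))"
  shows "D \<in> Diff'"
  using assms unfolding Diff_def padd_eq_plus by auto

lemma Diff_Qcar: "D \<in> Diff' \<Longrightarrow> D x \<in> Qcar'"
  by (cases "x \<in> P") (auto simp: DiffD I_Qcar)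

lemma Diff_repr: "D \<in> Diff' \<Longrightarrow> repr (D x) \<in> P" "D \<in> Diff' \<Longrightarrow> cl (repr (D x)) = D x"
  using repr Diff_Qcar by blast+

lemma Diff_add_repr:
  assumes "D \<in> Diff'" "x \<in> P" "y \<in> P"
  shows "D (x + y) = cl (repr (D x) + repr (D y))"
proof -
  have "D (x + y) = qadd (cl (repr (D x))) (cl (repr (D y)))"
    by (simp only: DiffD(3)[OF assms] Diff_repr(2)[OF assms(1)])
  then show ?thesis by (simp add: qadd_cls)
qed

lemma Diff_psc_repr:
  assumes "D \<in> Diff'" "x \<in> P"
  shows "D (psc c x) = cl (psc c (repr (D x)))"
proof -
  have "D (psc c x) = qscale I c (cl (repr (D x)))"
    by (simp only: DiffD(4)[OF assms] Diff_repr(2)[OF assms(1)])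
  then show ?thesis by (simp add: qscale_cls)
qed

lemma Diff_leibniz_repr:
  assumes D: "D \<in> Diff'" and xy: "x \<in> P" "y \<in> P"
  shows "D (mul x y) = cl (mul (repr (D x)) y + mul x (repr (D y)))"
proof -
  have "D (mul x y) = qadd (qmult tgt I (cl (repr (D x))) (cl y)) (qmult tgt I (cl x) (cl (repr (D y))))"
    by (simp only: DiffD(5)[OF D xy] Diff_repr(2)[OF D])
  then show ?thesis using xy Diff_repr(1)[OF D] by (simp add: qmult_cls qadd_cls)
qed

lemma Diff_zero: assumes "D \<in> Diff'" shows "D 0 = I"
  using Diff_psc_repr[OF assms P_zero, of 0] by (simp add: cls_zero)

lemma cls_add_cong: "cl x = cl x' \<Longrightarrow> cl y = cl y' \<Longrightarrow> cl (x + y) = cl (x' + y')"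
  by (metis qadd_cls)
lemma cls_mul_left_cong: "x \<in> P \<Longrightarrow> y \<in> P \<Longrightarrow> z \<in> P \<Longrightarrow> cl x = cl y \<Longrightarrow> cl (mul z x) = cl (mul z y)"
  by (metis qmult_cls)
lemma cls_mul_right_cong: "x \<in> P \<Longrightarrow> y \<in> P \<Longrightarrow> z \<in> P \<Longrightarrow> cl x = cl y \<Longrightarrow> cl (mul x z) = cl (mul y z)"
  by (metis qmult_cls)

lemma cls_lincomb_cong:
  assumes "finite J" "\<And>j. j \<in> J \<Longrightarrow> cl (u j) = cl (w j)"
  shows "cl (\<Sum>j\<in>J. psc (c j) (u j)) = cl (\<Sum>j\<in>J. psc (c j) (w j))"
proof -
  have "(\<Sum>j\<in>J. psc (c j) (u j)) - (\<Sum>j\<in>J. psc (c j) (w j)) = (\<Sum>j\<in>J. psc (c j) (u j - w j))"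
    by (simp add: sum_subtractf[symmetric] psc_diff)
  also have "\<dots> \<in> I" using assms by (intro I_sum I_psc) (simp add: cls_eq)
  finally show ?thesis by (simp add: cls_eq)
qed

text \<open>Linear combinations are computed on representatives of the values. Operators are indexed
  by an arbitrary finite set, so a family may contain repetitions.\<close>

definition lin_comb :: "'j set \<Rightarrow> ('j \<Rightarrow> ('v,'e,'k) pa \<Rightarrow> ('v,'e,'k) pa set) \<Rightarrow> ('j \<Rightarrow> 'k)
    \<Rightarrow> ('v,'e,'k) pa \<Rightarrow> ('v,'e,'k) pa set" where
  "lin_comb J \<Phi> c x = cl (\<Sum>j\<in>J. psc (c j) (repr (\<Phi> j x)))"

lemma lin_comb_cls:
  assumes "finite J" "\<And>j. j \<in> J \<Longrightarrow> y j \<in> P" "\<And>j. j \<in> J \<Longrightarrow> \<Phi> j x = cl (y j)"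
  shows "lin_comb J \<Phi> c x = cl (\<Sum>j\<in>J. psc (c j) (y j))"
  unfolding lin_comb_def using assms(1) by (rule cls_lincomb_cong) (simp add: assms(2,3) repr_cls)

lemma lin_comb_mono_neutral:
  assumes "finite J" "A \<subseteq> J" "\<And>j. j \<in> J - A \<Longrightarrow> \<Phi> j x = I"
  shows "lin_comb J \<Phi> c x = lin_comb A \<Phi> c x"
proof -
  have "(\<Sum>j\<in>J - A. psc (c j) (repr (\<Phi> j x))) \<in> I"
    using assms(3) repr_I by (intro I_sum I_psc) auto
  then show ?thesis
    using assms(1,2) by (simp add: lin_comb_def sum.subset_diff[of A J] cls_eq)
qed

lemma lin_comb_Plus:
  assumes "finite A" "finite J"
  shows "lin_comb (A <+> J) (case_sum \<Phi> \<Psi>) (case_sum a c) x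
       = cl ((\<Sum>j\<in>A. psc (a j) (repr (\<Phi> j x))) + (\<Sum>j\<in>J. psc (c j) (repr (\<Psi> j x))))"
  using assms by (simp add: lin_comb_def sum.Plus comp_def)

lemma lin_comb_image:
  assumes "finite K"
  shows "lin_comb K \<Phi> c = lin_comb (\<Phi> ` K) (\<lambda>F. F) (\<lambda>F. \<Sum>k\<in>{k\<in>K. \<Phi> k = F}. c k)"
proof (rule ext)
  fix x
  have "(\<Sum>k\<in>K. psc (c k) (repr (\<Phi> k x)))
      = (\<Sum>F\<in>\<Phi> ` K. \<Sum>k\<in>{k\<in>K. \<Phi> k = F}. psc (c k) (repr (\<Phi> k x)))"
    using assms by (rule sum.image_gen)
  also have "\<dots> = (\<Sum>F\<in>\<Phi> ` K. psc (\<Sum>k\<in>{k\<in>K. \<Phi> k = F}. c k) (repr (F x)))"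
    by (intro sum.cong refl) (simp add: psc_sum_left)
  finally show "lin_comb K \<Phi> c x = lin_comb (\<Phi> ` K) (\<lambda>F. F) (\<lambda>F. \<Sum>k\<in>{k\<in>K. \<Phi> k = F}. c k) x"
    unfolding lin_comb_def by simp
qed

lemma qsum_eq_lin_comb:
  assumes "finite S" "S \<subseteq> Diff'"
  shows "(\<lambda>x. qsum I S (\<lambda>F. qscale I (c F) (F x))) = lin_comb S (\<lambda>F. F) c"
proof (rule ext)
  fix x
  have "qsum I S (\<lambda>F. qscale I (c F) (F x)) = qsum I S (\<lambda>F. cl (psc (c F) (repr (F x))))"
  proof (rule qsum_cong)
    fix F assume "F \<in> S"
    then have "F x = cl (repr (F x))" using assms(2) Diff_repr(2) by blast
    then show "qscale I (c F) (F x) = cl (psc (c F) (repr (F x)))" by (metis qscale_cls)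
  qed
  then show "qsum I S (\<lambda>F. qscale I (c F) (F x)) = lin_comb S (\<lambda>F. F) c x"
    unfolding lin_comb_def using assms(1) by (simp add: qsum_cls)
qed

context
  fixes J :: "'j set" and \<Phi> :: "'j \<Rightarrow> ('v,'e,'k) pa \<Rightarrow> ('v,'e,'k) pa set" and c :: "'j \<Rightarrow> 'k"
  assumes J: "finite J" and \<Phi>: "\<And>j. j \<in> J \<Longrightarrow> \<Phi> j \<in> Diff'"
begin

lemma lin_comb_P: "(\<Sum>j\<in>J. psc (c j) (repr (\<Phi> j x))) \<in> P"
  using \<Phi> Diff_repr(1) by (auto intro!: P_sum P_psc)

lemma lin_comb_add:
  assumes "x \<in> P" "y \<in> P"
  shows "lin_comb J \<Phi> c (x + y) = qadd (lin_comb J \<Phi> c x) (lin_comb J \<Phi> c y)"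
proof -
  have "lin_comb J \<Phi> c (x + y) = cl (\<Sum>j\<in>J. psc (c j) (repr (\<Phi> j x) + repr (\<Phi> j y)))"
    using assms by (intro lin_comb_cls[OF J]) (simp_all add: \<Phi> Diff_repr(1) P_add Diff_add_repr)
  then show ?thesis by (simp add: lin_comb_def qadd_cls psc_add sum.distrib)
qed

lemma lin_comb_psc:
  assumes "x \<in> P"
  shows "lin_comb J \<Phi> c (psc d x) = qscale I d (lin_comb J \<Phi> c x)"
proof -
  have "lin_comb J \<Phi> c (psc d x) = cl (\<Sum>j\<in>J. psc (c j) (psc d (repr (\<Phi> j x))))"
    using assms by (intro lin_comb_cls[OF J]) (simp_all add: \<Phi> Diff_repr(1) P_psc Diff_psc_repr)
  then show ?thesis by (simp add: lin_comb_def qscale_cls psc_sum psc_psc mult.commute)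
qed

lemma lin_comb_mul:
  assumes x: "x \<in> P" and y: "y \<in> P"
  shows "lin_comb J \<Phi> c (mul x y)
       = qadd (qmult tgt I (lin_comb J \<Phi> c x) (cl y)) (qmult tgt I (cl x) (lin_comb J \<Phi> c y))"
proof -
  have rP: "repr (\<Phi> j z) \<in> P" if "j \<in> J" for j z using \<Phi>[OF that] by (rule Diff_repr)
  have "lin_comb J \<Phi> c (mul x y)
      = cl (\<Sum>j\<in>J. psc (c j) (mul (repr (\<Phi> j x)) y + mul x (repr (\<Phi> j y))))"
    using x y by (intro lin_comb_cls[OF J]) (simp_all add: \<Phi> rP P_add P_mul Diff_leibniz_repr)
  also have "(\<Sum>j\<in>J. psc (c j) (mul (repr (\<Phi> j x)) y + mul x (repr (\<Phi> j y))))
      = mul (\<Sum>j\<in>J. psc (c j) (repr (\<Phi> j x))) y + mul x (\<Sum>j\<in>J. psc (c j) (repr (\<Phi> j y)))"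
    using J rP x y by (simp add: psc_add sum.distrib pmult_lincomb_left pmult_lincomb_right P_finsupp)
  finally show ?thesis
    using x y lin_comb_P by (simp only: lin_comb_def qmult_cls qadd_cls)
qed

lemma lin_comb_Diff: "lin_comb J \<Phi> c \<in> Diff'"
proof (rule DiffI)
  show "lin_comb J \<Phi> c x \<in> Qcar'" for x
    unfolding lin_comb_def Qcar_iff using lin_comb_P by blast
  show "lin_comb J \<Phi> c x = I" if "x \<notin> P" for x
    unfolding lin_comb_def cls_eq_I using \<Phi> DiffD(2) that repr_I by (intro I_sum I_psc) auto
qed (simp_all add: lin_comb_add lin_comb_psc lin_comb_mul)

end

section \<open>Operators are determined by their values on vertices and arrows\<close>

lemma path_single: "path (w, [e]) \<longleftrightarrow> w \<in> V \<and> e \<in> E \<and> src e = w"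
  using path_cons[of w e "[]"] st by (auto simp: is_path_nil)

lemma arr_P: "e \<in> E \<Longrightarrow> arr e \<in> P"
  using st by (intro delta_P) (simp add: path_single)

lemma vtx_P: "v \<in> V \<Longrightarrow> vtx v \<in> P"
  by (simp add: delta_P is_path_nil)

lemma delta_snoc:
  assumes "path (v, xs @ [e])"
  shows "delta (v, xs @ [e]) = mul (delta (v, xs)) (arr e)" "path (v, xs)" "e \<in> E"
proof -
  have "path (v, xs)" "path (pend tgt (v, xs), [e])" using assms path_append by auto
  then show "path (v, xs)" "e \<in> E" "delta (v, xs @ [e]) = mul (delta (v, xs)) (arr e)"
    using path_single by (auto simp: pmult_delta_delta)
qed

context
  fixes D1 D2 :: "('v,'e,'k) pa \<Rightarrow> ('v,'e,'k) pa set"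
  assumes D1: "D1 \<in> Diff'" and D2: "D2 \<in> Diff'"
    and vtx_eq: "\<forall>v\<in>V. D1 (vtx v) = D2 (vtx v)"
    and arr_eq: "\<forall>e\<in>E. D1 (arr e) = D2 (arr e)"
begin

lemma Diff_agree_on_paths: "path (v, es) \<Longrightarrow> D1 (delta (v, es)) = D2 (delta (v, es))"
proof (induction es rule: rev_induct)
  case Nil
  then show ?case using vtx_eq by (simp add: is_path_nil)
next
  case (snoc e xs)
  note d = delta_snoc[OF snoc.prems]
  have xs_e: "delta (v, xs) \<in> P" "arr e \<in> P" using d by (auto intro!: delta_P arr_P)
  show ?case unfolding d(1)
    using DiffD(5)[OF D1 xs_e] DiffD(5)[OF D2 xs_e] snoc.IH[OF d(2)] arr_eq d(3) by simp
qed

lemma Diff_agree_on_lincomb: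
  "finite A \<Longrightarrow> \<forall>a\<in>A. path a
    \<Longrightarrow> D1 (\<Sum>a\<in>A. psc (c a) (delta a)) = D2 (\<Sum>a\<in>A. psc (c a) (delta a))"
proof (induction A rule: finite_induct)
  case empty
  then show ?case using Diff_zero[OF D1] Diff_zero[OF D2] by (simp only: sum.empty)
next
  case (insert a A)
  have P1: "psc (c a) (delta a) \<in> P" "(\<Sum>a\<in>A. psc (c a) (delta a)) \<in> P" "delta a \<in> P"
    using insert by (auto intro!: P_psc P_sum delta_P)
  have da: "D1 (delta a) = D2 (delta a)"
    using Diff_agree_on_paths[of "fst a" "snd a"] insert by simp
  have IH: "D1 (\<Sum>a\<in>A. psc (c a) (delta a)) = D2 (\<Sum>a\<in>A. psc (c a) (delta a))"
    using insert by simp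
  show ?case
    by (simp only: da IH sum.insert[OF insert(1,2)] DiffD(3)[OF D1 P1(1,2)] DiffD(3)[OF D2 P1(1,2)]
        DiffD(4)[OF D1 P1(3)] DiffD(4)[OF D2 P1(3)])
qed

lemma Diff_eq_on_generators: "D1 = D2"
proof (rule ext)
  fix x
  show "D1 x = D2 x"
  proof (cases "x \<in> P")
    case True
    then have "x = (\<Sum>a\<in>supp x. psc (x a) (delta a))" by (simp add: finsupp_expansion P_finsupp)
    moreover have "D1 (\<Sum>a\<in>supp x. psc (x a) (delta a)) = D2 (\<Sum>a\<in>supp x. psc (x a) (delta a))"
      using True by (intro Diff_agree_on_lincomb) (auto simp: P_finsupp finite_supp intro: P_supp_path)
    ultimately show ?thesis by simp
  next
    case False
    then show ?thesis using DiffD(2)[OF D1] DiffD(2)[OF D2] by simp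
  qed
qed

end

section \<open>Inner differential operators\<close>

abbreviation Dinner' where "Dinner' \<equiv> Dinner V E src tgt I"

lemma Dinner_cls: "\<mu> \<in> P \<Longrightarrow> x \<in> P \<Longrightarrow> Dinner' (cl \<mu>) x = cl (mul \<mu> x - mul x \<mu>)"
  by (simp add: Dinner_def qmult_cls qscale_cls qadd_cls psc_minus_one)

lemma Dinner_Diff:
  assumes mu: "\<mu> \<in> P"
  shows "Dinner' (cl \<mu>) \<in> Diff'"
proof (rule DiffI)
  fix x y assume x: "x \<in> P" and y: "y \<in> P"
  have "mul \<mu> (mul x y) - mul (mul x y) \<mu> = mul (mul \<mu> x - mul x \<mu>) y + mul x (mul \<mu> y - mul y \<mu>)"
    using x y mu by (simp add: mul_diff_left mul_diff_right mul_assoc P_mul)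
  then show "Dinner' (cl \<mu>) (mul x y)
      = qadd (qmult tgt I (Dinner' (cl \<mu>) x) (cl y)) (qmult tgt I (cl x) (Dinner' (cl \<mu>) y))"
    using x y mu by (simp add: Dinner_cls P_mul qmult_cls qadd_cls P_diff)
  show "Dinner' (cl \<mu>) (x + y) = qadd (Dinner' (cl \<mu>) x) (Dinner' (cl \<mu>) y)"
    using x y mu by (simp add: Dinner_cls P_add qadd_cls mul_add_left mul_add_right algebra_simps)
next
  fix x c assume "x \<in> P"
  then show "Dinner' (cl \<mu>) (psc c x) = qscale I c (Dinner' (cl \<mu>) x)"
    using mu by (simp add: Dinner_cls P_psc qscale_cls mul_psc_left mul_psc_right psc_diff)
next
  fix x assume "x \<in> P"
  then show "Dinner' (cl \<mu>) x \<in> Qcar'"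
    using mu by (auto simp: Dinner_cls Qcar_iff intro!: P_diff P_mul)
qed (simp add: Dinner_def)

lemma Dinner_basis_Diff: "s \<in> Qb \<Longrightarrow> Dinner' s \<in> Diff'"
  using Dinner_Diff[OF brep_P] qrep_path_cls(2) by metis

lemma Dinner_basis_apply: "s \<in> Qb \<Longrightarrow> x \<in> P \<Longrightarrow> Dinner' s x = cl (mul (brep s) x - mul x (brep s))"
  using Dinner_cls[OF brep_P] qrep_path_cls(2) by metis

lemma Dinner_basis_vtx:
  assumes "s \<in> Qb" "v \<in> V"
  shows "Dinner' s (vtx v)
       = cl (psc ((if qh' s = v then 1 else 0) - (if qt' s = v then 1 else 0)) (brep s))"
proof -
  have "mul (brep s) (vtx v) - mul (vtx v) (brep s)
      = psc ((if qh' s = v then 1 else 0) - (if qt' s = v then 1 else 0)) (brep s)"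
    by (simp add: brep_mul_vtx vtx_mul_brep psc_def fun_eq_iff algebra_simps)
  then show ?thesis using assms by (simp add: Dinner_basis_apply vtx_P)
qed

lemma commutator_lincomb:
  assumes "finite X" "X \<subseteq> Qb" "y \<in> P"
  shows "mul (\<Sum>q\<in>X. psc (a q) (brep q)) y - mul y (\<Sum>q\<in>X. psc (a q) (brep q))
     = (\<Sum>q\<in>X. psc (a q) (mul (brep q) y - mul y (brep q)))"
  using assms
  by (simp add: pmult_lincomb_left pmult_lincomb_right P_finsupp brep_P subset_iff psc_diff sum_subtractf)

lemma lin_comb_Dinner:
  assumes "finite A" "A \<subseteq> Qb" "x \<in> P"
  shows "lin_comb A Dinner' a x = cl (mul (\<Sum>q\<in>A. psc (a q) (brep q)) x - mul x (\<Sum>q\<in>A. psc (a q) (brep q)))"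
  using assms
  by (simp add: lin_comb_cls[where y="\<lambda>q. mul (brep q) x - mul x (brep q)"] commutator_lincomb
      Dinner_basis_apply brep_P P_mul P_diff subset_iff)

section \<open>The operators D_{r,s}\<close>

lemma replace_at_path:
  assumes ss: "path (src r, ss)" "pend tgt (src r, ss) = tgt r"
    and p: "path (v, xs)" and i: "i \<in> arrow_positions r xs"
  shows "path (v, replace_at ss xs i)" "pend tgt (v, replace_at ss xs i) = pend tgt (v, xs)"
proof -
  have il: "i < length xs" "xs ! i = r" using i by (auto simp: arrow_positions_def)
  then have xs: "xs = take i xs @ [r] @ drop (Suc i) xs" by (metis append_Cons append_Nil id_take_nth_drop)
  then have "path (v, take i xs)" "path (pend tgt (v, take i xs), r # drop (Suc i) xs)"
    using p path_append by (metis, metis append_Cons append_Nil)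
  then have h: "path (v, take i xs)" "pend tgt (v, take i xs) = src r" "path (tgt r, drop (Suc i) xs)"
    using path_cons by auto
  show "path (v, replace_at ss xs i)" unfolding replace_at_def
    using h ss by (simp add: path_append pend_append)
  have "pend tgt (v, xs) = pend tgt (tgt r, drop (Suc i) xs)"
    by (subst xs) (simp only: pend_append[of _ v "take i xs"] h(2) append_Cons append_Nil pend_cons)
  then show "pend tgt (v, replace_at ss xs i) = pend tgt (v, xs)" unfolding replace_at_def
    by (simp only: pend_append[of _ v "take i xs"] h(2) pend_append[of _ "src r" ss] ss(2))
qed

context
  fixes r ss
  assumes ss: "path (src r, ss)" "pend tgt (src r, ss) = tgt r"
begin

lemma subst_paths_P: "path p \<Longrightarrow> subst_paths r ss p \<in> P"
  unfolding subst_paths_def using replace_at_path[OF ss, of "fst p" "snd p"] by (intro P_sum delta_P) auto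

lemma subst_op_P: "f \<in> P \<Longrightarrow> subst_op r ss f \<in> P"
  unfolding subst_op_def by (intro P_sum P_psc subst_paths_P P_supp_path) auto

lemma subst_paths_mul_delta:
  assumes a: "path (v, xs)"
  shows "mul (subst_paths r ss (v, xs)) (delta (w, ys))
      = (if pend tgt (v, xs) = w then \<Sum>i\<in>arrow_positions r xs. delta (v, replace_at ss (xs @ ys) i) else 0)"
proof -
  have "mul (delta (v, replace_at ss xs i)) (delta (w, ys))
      = (if pend tgt (v, xs) = w then delta (v, replace_at ss (xs @ ys) i) else 0)"
    if i: "i \<in> arrow_positions r xs" for i
    using i replace_at_path(2)[OF ss a i]
    by (simp add: pmult_delta_delta replace_at_append_left arrow_positions_def)
  then show ?thesis
    unfolding subst_paths_def by (simp add: pmult_sum_left finsupp_delta finite_arrow_positions)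
qed

lemma delta_mul_subst_paths:
  "mul (delta (v, xs)) (subst_paths r ss (w, ys))
      = (if pend tgt (v, xs) = w
         then \<Sum>j\<in>arrow_positions r ys. delta (v, replace_at ss (xs @ ys) (length xs + j)) else 0)"
  unfolding subst_paths_def
  by (simp add: pmult_sum_right finsupp_delta finite_arrow_positions pmult_delta_delta
      replace_at_append_right)

lemma subst_op_mul_delta:
  assumes a: "path (v, xs)"
  shows "subst_op r ss (mul (delta (v, xs)) (delta (w, ys)))
       = mul (subst_paths r ss (v, xs)) (delta (w, ys)) + mul (delta (v, xs)) (subst_paths r ss (w, ys))"
proof (cases "pend tgt (v, xs) = w")
  case True
  have "disjnt (arrow_positions r xs) ((\<lambda>j. length xs + j) ` arrow_positions r ys)"
    by (auto simp: arrow_positions_def disjnt_def)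
  then have "subst_paths r ss (v, xs @ ys)
      = (\<Sum>i\<in>arrow_positions r xs. delta (v, replace_at ss (xs @ ys) i))
      + (\<Sum>j\<in>arrow_positions r ys. delta (v, replace_at ss (xs @ ys) (length xs + j)))"
    unfolding subst_paths_def
    by (simp add: arrow_positions_append sum.union_disjoint finite_arrow_positions disjnt_def
        sum.reindex inj_on_def)
  then show ?thesis
    using True by (simp add: pmult_delta_delta subst_op_delta subst_paths_mul_delta[OF a] delta_mul_subst_paths)
next
  case False
  then show ?thesis
    by (simp add: pmult_delta_delta subst_op_zero subst_paths_mul_delta[OF a] delta_mul_subst_paths)
qed

lemma subst_op_leibniz:
  assumes f: "f \<in> P" and g: "g \<in> P"
  shows "subst_op r ss (mul f g) = mul (subst_op r ss f) g + mul f (subst_op r ss g)"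
proof -
  note fs = finite_supp P_finsupp finsupp_delta pmult_finsupp subst_paths_finsupp subst_op_finsupp
  have path_mul: "subst_op r ss (mul (delta a) g) = mul (subst_paths r ss a) g + mul (delta a) (subst_op r ss g)"
    if a: "path a" for a
  proof -
    have "subst_op r ss (mul (delta a) g) = subst_op r ss (\<Sum>b\<in>supp g. psc (g b) (mul (delta a) (delta b)))"
      by (simp only: pmult_expand_right[OF P_finsupp[OF g] finsupp_delta])
    also have "\<dots> = (\<Sum>b\<in>supp g. psc (g b) (mul (subst_paths r ss a) (delta b) + mul (delta a) (subst_paths r ss b)))"
      using g a subst_op_mul_delta[of "fst a" "snd a" "fst b" "snd b" for b]
      by (simp add: subst_op_lincomb fs)
    also have "\<dots> = (\<Sum>b\<in>supp g. psc (g b) (mul (subst_paths r ss a) (delta b)))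
                  + mul (delta a) (\<Sum>b\<in>supp g. psc (g b) (subst_paths r ss b))"
      using g by (simp add: psc_add sum.distrib pmult_lincomb_right fs)
    also have "\<dots> = mul (subst_paths r ss a) g + mul (delta a) (subst_op r ss g)"
      by (simp only: pmult_expand_right[OF P_finsupp[OF g] subst_paths_finsupp] subst_op_def)
    finally show ?thesis .
  qed
  have "subst_op r ss (mul f g) = subst_op r ss (\<Sum>a\<in>supp f. psc (f a) (mul (delta a) g))"
    by (simp only: pmult_expand_left[OF P_finsupp[OF f] P_finsupp[OF g]])
  also have "\<dots> = (\<Sum>a\<in>supp f. psc (f a) (mul (subst_paths r ss a) g + mul (delta a) (subst_op r ss g)))"
    using f g path_mul P_supp_path[OF f] by (simp add: subst_op_lincomb fs)
  also have "\<dots> = mul (\<Sum>a\<in>supp f. psc (f a) (subst_paths r ss a)) g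
                  + (\<Sum>a\<in>supp f. psc (f a) (mul (delta a) (subst_op r ss g)))"
    using f g by (simp add: psc_add sum.distrib pmult_lincomb_left fs)
  also have "\<dots> = mul (subst_op r ss f) g + mul f (subst_op r ss g)"
    using pmult_expand_left[OF P_finsupp[OF f] subst_op_finsupp[of r ss g]]
    by (simp only: subst_op_def[of r ss f])
  finally show ?thesis .
qed

definition Dsubst where "Dsubst = (\<lambda>x. if x \<in> P then cl (subst_op r ss x) else I)"

lemma Dsubst_Diff: "Dsubst \<in> Diff'"
proof (rule DiffI)
  fix x y assume "x \<in> P" "y \<in> P"
  then show "Dsubst (x + y) = qadd (Dsubst x) (Dsubst y)"
    and "Dsubst (mul x y) = qadd (qmult tgt I (Dsubst x) (cl y)) (qmult tgt I (cl x) (Dsubst y))"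
    using subst_op_P
    by (simp_all add: Dsubst_def P_add subst_op_add P_finsupp qadd_cls P_mul subst_op_leibniz qmult_cls)
qed (auto simp: Dsubst_def Qcar_iff subst_op_P P_psc subst_op_psc P_finsupp qscale_cls)

lemma Dsubst_vtx: "v \<in> V \<Longrightarrow> Dsubst (vtx v) = I"
  by (simp add: Dsubst_def vtx_P subst_op_delta subst_paths_def arrow_positions_def cls_zero)

lemma Dsubst_arr: "e \<in> E \<Longrightarrow> Dsubst (arr e) = (if e = r then cl (delta (src r, ss)) else I)"
proof -
  assume "e \<in> E"
  moreover have "arrow_positions r [e] = (if e = r then {0} else {})"
    by (auto simp: arrow_positions_def)
  ultimately show ?thesis
    by (simp add: arr_P Dsubst_def subst_op_delta subst_paths_def replace_at_def cls_zero)
qed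

end

abbreviation Drs' where "Drs' \<equiv> Drs V E src tgt I"

definition parallel :: "'e \<Rightarrow> ('v,'e,'k) pa set \<Rightarrow> bool" where
  "parallel r s \<longleftrightarrow> src r = qt' s \<and> tgt r = qh' s"

lemma Drs:
  assumes r: "r \<in> E" and s: "s \<in> Qb" and par: "parallel r s"
  shows "Drs' r s \<in> Diff'" "Drs' r s (arr r) = s"
    "\<And>e. e \<in> E \<Longrightarrow> e \<noteq> r \<Longrightarrow> Drs' r s (arr e) = I"
    "\<And>v. v \<in> V \<Longrightarrow> Drs' r s (vtx v) = I"
proof -
  define ss where "ss = snd (qrep V E src tgt I s)"
  have qr: "qrep V E src tgt I s = (src r, ss)"
    using par unfolding ss_def qt_def parallel_def by (metis prod.collapse)
  have ssp: "path (src r, ss)" "pend tgt (src r, ss) = tgt r"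
    using qrep_path_cls(1)[OF s] par qr unfolding qh_def parallel_def by auto
  have "cl (delta (src r, ss)) = s" using qrep_path_cls(2)[OF s] qr by (simp add: brep_def)
  then have Dsubst: "Dsubst r ss \<in> Diff'" "Dsubst r ss (arr r) = s"
    "\<And>e. e \<in> E \<Longrightarrow> e \<noteq> r \<Longrightarrow> Dsubst r ss (arr e) = I" "\<And>v. v \<in> V \<Longrightarrow> Dsubst r ss (vtx v) = I"
    using Dsubst_Diff[OF ssp] Dsubst_arr[OF ssp] Dsubst_vtx[OF ssp] r by auto
  have "Drs' r s = Dsubst r ss" unfolding Drs_def
  proof (rule the_equality)
    fix D assume D: "D \<in> Diff' \<and> D (arr r) = s \<and> (\<forall>e\<in>E - {r}. D (arr e) = I) \<and> (\<forall>v\<in>V. D (vtx v) = I)"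
    have "D (arr e) = Dsubst r ss (arr e)" if "e \<in> E" for e
      using D Dsubst that by (cases "e = r") auto
    then show "D = Dsubst r ss"
      using D Dsubst by (intro Diff_eq_on_generators) auto
  qed (use Dsubst in auto)
  then show "Drs' r s \<in> Diff'" "Drs' r s (arr r) = s"
    "\<And>e. e \<in> E \<Longrightarrow> e \<noteq> r \<Longrightarrow> Drs' r s (arr e) = I" "\<And>v. v \<in> V \<Longrightarrow> Drs' r s (vtx v) = I"
    using Dsubst by auto
qed

section \<open>Values of a differential operator on the vertices\<close>

lemma vtx_mul_vtx: "mul (vtx u) (vtx v) = (if u = v then vtx u else 0)"
  by (simp add: mul_delta_vtx pend_def)

lemma mul_sum_vtx:
  assumes f: "f \<in> P"
  shows "mul f (\<Sum>v\<in>V. vtx v) = f"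
proof -
  have "mul f (\<Sum>v\<in>V. vtx v) = (\<Sum>v\<in>V. mul f (vtx v))"
    using f finV by (simp add: mul_sum_right vtx_P)
  also have "\<dots> = (\<Sum>v\<in>V. \<Sum>a\<in>supp f. psc (f a) (if pend tgt a = v then delta a else 0))"
    by (intro sum.cong refl) (simp add: pmult_expand_left[OF P_finsupp[OF f] finsupp_delta] mul_delta_vtx)
  also have "\<dots> = (\<Sum>a\<in>supp f. \<Sum>v\<in>V. psc (f a) (if pend tgt a = v then delta a else 0))"
    by (rule sum.swap)
  also have "\<dots> = (\<Sum>a\<in>supp f. psc (f a) (delta a))"
  proof (rule sum.cong[OF refl])
    fix a assume "a \<in> supp f"
    then have "pend tgt a \<in> V" using f by (intro path_pend P_supp_path)
    then show "(\<Sum>v\<in>V. psc (f a) (if pend tgt a = v then delta a else 0)) = psc (f a) (delta a)"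
      using finV by (simp add: if_distrib[of "psc (f a)"] cong: if_cong)
  qed
  also have "\<dots> = f" using f by (simp add: finsupp_expansion[symmetric] P_finsupp)
  finally show ?thesis .
qed

context
  fixes D assumes D: "D \<in> Diff'"
begin

lemma Diff_vtx_corner:
  assumes u: "u \<in> V"
  shows "mul (vtx u) (mul (repr (D (vtx u))) (vtx u)) \<in> I"
proof -
  let ?d = "repr (D (vtx u))"
  have dP: "?d \<in> P" using D by (rule Diff_repr)
  have "cl ?d = cl (mul ?d (vtx u) + mul (vtx u) ?d)"
    using Diff_leibniz_repr[OF D vtx_P[OF u] vtx_P[OF u]] Diff_repr(2)[OF D, of "vtx u"]
    by (simp add: vtx_mul_vtx)
  then have "cl (mul (vtx u) ?d) = cl (mul (vtx u) (mul ?d (vtx u) + mul (vtx u) ?d))"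
    using dP u by (intro cls_mul_left_cong) (auto intro!: P_add P_mul vtx_P)
  also have "\<dots> = cl (mul (vtx u) (mul ?d (vtx u)) + mul (vtx u) ?d)"
    using dP u by (simp add: mul_add_right P_mul vtx_P mul_assoc[symmetric] vtx_mul_vtx)
  finally show ?thesis by (simp add: cls_eq) (metis I_uminus minus_minus)
qed

lemma Diff_vtx_cross:
  assumes u: "u \<in> V" and v: "v \<in> V" "v \<noteq> u"
  shows "mul (repr (D (vtx u))) (vtx v) + mul (vtx u) (mul (repr (D (vtx v))) (vtx v)) \<in> I"
proof -
  let ?du = "repr (D (vtx u))" and ?dv = "repr (D (vtx v))"
  have dP: "?du \<in> P" "?dv \<in> P" using D by (simp_all add: Diff_repr)
  have "D (mul (vtx u) (vtx v)) = I" using v Diff_zero[OF D] by (simp add: vtx_mul_vtx)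
  then have "mul ?du (vtx v) + mul (vtx u) ?dv \<in> I"
    using Diff_leibniz_repr[OF D vtx_P[OF u] vtx_P[OF v(1)]] by (simp add: cls_eq_I)
  then have "mul (mul ?du (vtx v) + mul (vtx u) ?dv) (vtx v) \<in> I"
    using v by (intro I_mul_right vtx_P)
  then show ?thesis using dP u v by (simp add: mul_add_left P_mul vtx_P mul_assoc vtx_mul_vtx)
qed

text \<open>The element \<open>\<mu> = \<Sum>\<^sub>v d\<^sub>v v\<close>, where \<open>d\<^sub>v\<close> represents \<open>D(v)\<close>, realizes \<open>D\<close> on the
  vertices as an inner operator: \<open>\<mu> u - u \<mu> \<equiv> d\<^sub>u u + \<Sum>\<^sub>v\<^sub>\<noteq>\<^sub>u d\<^sub>u v = d\<^sub>u\<close> by the two lemmas above.\<close>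

lemma Diff_inner_on_vertices: "\<exists>\<mu>\<in>P. \<forall>u\<in>V. D (vtx u) = cl (mul \<mu> (vtx u) - mul (vtx u) \<mu>)"
proof -
  define d where "d v = repr (D (vtx v))" for v
  define \<mu> where "\<mu> = (\<Sum>v\<in>V. mul (d v) (vtx v))"
  have dP: "d v \<in> P" for v unfolding d_def using D by (rule Diff_repr)
  have muP: "\<mu> \<in> P" unfolding \<mu>_def using dP by (intro P_sum P_mul vtx_P) auto
  have "D (vtx u) = cl (mul \<mu> (vtx u) - mul (vtx u) \<mu>)" if u: "u \<in> V" for u
  proof -
    let ?t = "\<lambda>v. mul (vtx u) (mul (d v) (vtx v)) + mul (d u) (vtx v)"
    have right: "mul \<mu> (vtx u) = mul (d u) (vtx u)"
    proof -
      have "mul \<mu> (vtx u) = (\<Sum>v\<in>V. mul (d v) (mul (vtx v) (vtx u)))"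
        unfolding \<mu>_def using finV dP u by (simp add: mul_sum_left P_mul vtx_P mul_assoc)
      also have "\<dots> = (\<Sum>v\<in>V. if v = u then mul (d u) (vtx u) else 0)"
        by (intro sum.cong refl) (auto simp: vtx_mul_vtx)
      finally show ?thesis using u finV by simp
    qed
    have "mul (vtx u) \<mu> + d u = (\<Sum>v\<in>V. ?t v)"
      unfolding \<mu>_def using finV dP u mul_sum_vtx[OF dP, of u]
      by (simp add: mul_sum_right P_mul vtx_P sum.distrib)
    also have "\<dots> = ?t u + (\<Sum>v\<in>V - {u}. ?t v)" by (rule sum.remove[OF finV u])
    finally have "(mul \<mu> (vtx u) - mul (vtx u) \<mu>) - d u
        = - (mul (vtx u) (mul (d u) (vtx u)) + (\<Sum>v\<in>V - {u}. ?t v))"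
      unfolding right by (simp add: algebra_simps)
    also have "\<dots> \<in> I"
    proof -
      have "?t v \<in> I" if "v \<in> V - {u}" for v
        using Diff_vtx_cross[OF u, of v] that by (simp add: d_def add.commute)
      moreover have "mul (vtx u) (mul (d u) (vtx u)) \<in> I"
        unfolding d_def by (rule Diff_vtx_corner[OF u])
      ultimately show ?thesis by (intro I_uminus I_add[of _ "sum ?t (V - {u})"] I_sum)
    qed
    finally have "cl (mul \<mu> (vtx u) - mul (vtx u) \<mu>) = cl (d u)" by (simp only: cls_eq)
    then show ?thesis using Diff_repr(2)[OF D, of "vtx u"] by (simp add: d_def)
  qed
  with muP show ?thesis by blast
qed

end

section \<open>Linear independence\<close>

abbreviation "QA' \<equiv> QA V E src tgt I Qb"
abbreviation "B1' \<equiv> B1 V E src tgt I Qb"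
abbreviation "B2' \<equiv> B2 V E src tgt I Qb"

lemma B2_eq: "B2' = {Drs' r s | r s. r \<in> E \<and> s \<in> Qb \<and> parallel r s}"
  by (simp add: B2_def parallel_def)

lemma B1_Diff: "B1' \<subseteq> Diff'"
  unfolding B1_def QA_def using Dinner_basis_Diff by auto

lemma B2_Diff: "B2' \<subseteq> Diff'"
  unfolding B2_eq using Drs(1) by auto

definition inner_gen where "inner_gen F = (SOME s. s \<in> QA' \<and> F = Dinner' s)"

definition arrow_gen where
  "arrow_gen F = (SOME (r, s). r \<in> E \<and> s \<in> Qb \<and> parallel r s \<and> F = Drs' r s)"

lemma inner_gen:
  assumes "F \<in> B1'"
  shows "inner_gen F \<in> Qb" "qt' (inner_gen F) \<noteq> qh' (inner_gen F)" "F = Dinner' (inner_gen F)"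
proof -
  obtain s where s: "s \<in> QA'" "F = Dinner' s" using assms unfolding B1_def by blast
  have "inner_gen F \<in> QA' \<and> F = Dinner' (inner_gen F)"
    unfolding inner_gen_def by (rule someI[where P="\<lambda>t. t \<in> QA' \<and> F = Dinner' t"]) (rule conjI[OF s])
  then show "inner_gen F \<in> Qb" "qt' (inner_gen F) \<noteq> qh' (inner_gen F)" "F = Dinner' (inner_gen F)"
    unfolding QA_def by auto
qed

lemma arrow_gen:
  assumes "F \<in> B2'"
  obtains r s where "arrow_gen F = (r, s)" "r \<in> E" "s \<in> Qb" "parallel r s" "F = Drs' r s"
proof -
  obtain r s where "r \<in> E" "s \<in> Qb" "parallel r s" "F = Drs' r s"
    using assms unfolding B2_eq by blast
  then have gen: "case arrow_gen F of (r, s) \<Rightarrow> r \<in> E \<and> s \<in> Qb \<and> parallel r s \<and> F = Drs' r s"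
    unfolding arrow_gen_def
    by (intro someI[where P="\<lambda>(r, s). r \<in> E \<and> s \<in> Qb \<and> parallel r s \<and> F = Drs' r s" and x="(r, s)"])
       simp
  obtain r' s' where "arrow_gen F = (r', s')" by (cases "arrow_gen F")
  with gen show ?thesis by (intro that[of r' s']) simp_all
qed

lemma lin_comb_zero_coeff_B1:
  assumes S: "finite S" "S \<subseteq> B1' \<union> B2'" and z: "lin_comb S (\<lambda>F. F) c = (\<lambda>x. I)"
    and F0: "F0 \<in> S \<inter> B1'"
  shows "c F0 = 0"
proof -
  define v where "v = qh' (inner_gen F0)"
  have v: "v \<in> V" unfolding v_def using F0 inner_gen(1) qh_V by blast
  define w where "w F = (if qh' (inner_gen F) = v then 1 else 0) - (if qt' (inner_gen F) = v then 1 else (0::'k))" for F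
  have val: "F (vtx v) = cl (if F \<in> B1' then psc (w F) (brep (inner_gen F)) else 0)" if "F \<in> S" for F
  proof (cases "F \<in> B1'")
    case True
    have "F (vtx v) = Dinner' (inner_gen F) (vtx v)" using inner_gen(3)[OF True] by (rule fun_cong)
    then show ?thesis using True Dinner_basis_vtx[OF inner_gen(1)[OF True] v] by (simp add: w_def)
  next
    case False
    with that S(2) have "F \<in> B2'" by blast
    then obtain r s where "r \<in> E" "s \<in> Qb" "parallel r s" "F = Drs' r s"
      by (rule arrow_gen)
    then show ?thesis using False Drs(4) v by (simp add: cls_zero)
  qed
  have "lin_comb S (\<lambda>F. F) c (vtx v)
      = cl (\<Sum>F\<in>S. psc (c F) (if F \<in> B1' then psc (w F) (brep (inner_gen F)) else 0))"
    using val inner_gen(1) by (intro lin_comb_cls[OF S(1)]) (auto intro!: P_psc brep_P P_zero)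
  also have "(\<Sum>F\<in>S. psc (c F) (if F \<in> B1' then psc (w F) (brep (inner_gen F)) else 0))
      = (\<Sum>F\<in>S \<inter> B1'. psc (c F * w F) (brep (inner_gen F)))"
    using S(1) by (simp add: if_distrib psc_psc sum.inter_filter[symmetric] Int_def cong: if_cong)
  finally have "cl (\<Sum>F\<in>S \<inter> B1'. psc (c F * w F) (brep (inner_gen F))) = I"
    using fun_cong[OF z, of "vtx v"] by simp
  then have "(\<Sum>F\<in>S \<inter> B1'. psc (c F * w F) (brep (inner_gen F))) \<in> I"
    by (simp only: cls_eq_I)
  moreover have "inj_on inner_gen (S \<inter> B1')"
  proof (rule inj_onI)
    fix F G assume "F \<in> S \<inter> B1'" "G \<in> S \<inter> B1'" "inner_gen F = inner_gen G"
    then show "F = G" using inner_gen(3)[of F] inner_gen(3)[of G] by auto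
  qed
  moreover have "inner_gen ` (S \<inter> B1') \<subseteq> Qb" using inner_gen(1) by auto
  ultimately have "c F0 * w F0 = 0"
    using S(1) F0 by (intro quot_basis_indep_inj[where T="S \<inter> B1'" and k="\<lambda>F. c F * w F"]) auto
  moreover have "w F0 = 1" using inner_gen(2) F0 unfolding w_def v_def by auto
  ultimately show ?thesis by simp
qed

lemma lin_comb_zero_coeff_B2:
  assumes S: "finite S" "S \<subseteq> B1' \<union> B2'" and z: "lin_comb S (\<lambda>F. F) c = (\<lambda>x. I)"
    and B1_zero: "\<forall>F\<in>S \<inter> B1'. c F = 0" and F0: "F0 \<in> S - B1'"
  shows "c F0 = 0"
proof -
  have gen: "fst (arrow_gen F) \<in> E \<and> snd (arrow_gen F) \<in> Qb \<and> parallel (fst (arrow_gen F)) (snd (arrow_gen F))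
      \<and> F = Drs' (fst (arrow_gen F)) (snd (arrow_gen F))" if "F \<in> S - B1'" for F
  proof -
    have "F \<in> B2'" using that S(2) by blast
    then obtain r s where "arrow_gen F = (r, s)" "r \<in> E" "s \<in> Qb" "parallel r s" "F = Drs' r s"
      by (rule arrow_gen)
    then show ?thesis by simp
  qed
  define e where "e = fst (arrow_gen F0)"
  have e: "e \<in> E" using gen[OF F0] unfolding e_def by blast
  define T where "T = {F \<in> S - B1'. fst (arrow_gen F) = e}"
  have val: "F (arr e) = cl (if fst (arrow_gen F) = e then brep (snd (arrow_gen F)) else 0)"
    if "F \<in> S - B1'" for F
    using gen[OF that] Drs(2,3)[of "fst (arrow_gen F)" "snd (arrow_gen F)"] e qrep_path_cls(2)
    by (auto simp: cls_zero)
  have "lin_comb S (\<lambda>F. F) c (arr e) = lin_comb (S - B1') (\<lambda>F. F) c (arr e)"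
    unfolding lin_comb_def using S(1) B1_zero by (intro arg_cong[where f=cl] sum.mono_neutral_right) auto
  also have "\<dots> = cl (\<Sum>F\<in>S - B1'. psc (c F) (if fst (arrow_gen F) = e then brep (snd (arrow_gen F)) else 0))"
    using S(1) val gen by (intro lin_comb_cls) (auto intro: brep_P P_zero)
  also have "(\<Sum>F\<in>S - B1'. psc (c F) (if fst (arrow_gen F) = e then brep (snd (arrow_gen F)) else 0))
      = (\<Sum>F\<in>T. psc (c F) (brep (snd (arrow_gen F))))"
    unfolding T_def using S(1) by (simp add: if_distrib sum.inter_filter[symmetric] cong: if_cong)
  finally have "cl (\<Sum>F\<in>T. psc (c F) (brep (snd (arrow_gen F)))) = I"
    using fun_cong[OF z, of "arr e"] by simp
  then have "(\<Sum>F\<in>T. psc (c F) (brep (snd (arrow_gen F)))) \<in> I"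
    by (simp only: cls_eq_I)
  moreover have "inj_on (\<lambda>F. snd (arrow_gen F)) T"
  proof (rule inj_onI)
    fix F G assume "F \<in> T" "G \<in> T" "snd (arrow_gen F) = snd (arrow_gen G)"
    then show "F = G" using gen[of F] gen[of G] unfolding T_def by auto
  qed
  ultimately show "c F0 = 0"
    using S(1) F0 gen
    by (intro quot_basis_indep_inj[where T=T and g="\<lambda>F. snd (arrow_gen F)" and k=c])
       (auto simp: T_def e_def)
qed

lemma B_lin_indep:
  assumes "finite S" "S \<subseteq> B1' \<union> B2'" "lin_comb S (\<lambda>F. F) c = (\<lambda>x. I)"
  shows "\<forall>F\<in>S. c F = 0"
  using lin_comb_zero_coeff_B1[OF assms] lin_comb_zero_coeff_B2[OF assms] by blast

section \<open>Spanning\<close>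

context
  fixes D assumes D: "D \<in> Diff'" and vanish: "\<forall>u\<in>V. D (vtx u) = I"
begin

lemma Diff_vtx_mul_left:
  assumes u: "u \<in> V" and x: "x \<in> P"
  shows "D (mul (vtx u) x) = cl (mul (vtx u) (repr (D x)))"
proof -
  have "D (mul (vtx u) x) = cl (mul (repr (D (vtx u))) x + mul (vtx u) (repr (D x)))"
    using Diff_leibniz_repr[OF D vtx_P[OF u] x] .
  also have "\<dots> = cl (0 + mul (vtx u) (repr (D x)))"
    using vanish u repr_I x by (intro cls_add_cong) (auto simp: cls_eq I_mul_right)
  finally show ?thesis by simp
qed

lemma Diff_vtx_mul_right:
  assumes u: "u \<in> V" and x: "x \<in> P"
  shows "D (mul x (vtx u)) = cl (mul (repr (D x)) (vtx u))"
proof -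
  have "D (mul x (vtx u)) = cl (mul (repr (D x)) (vtx u) + mul x (repr (D (vtx u))))"
    using Diff_leibniz_repr[OF D x vtx_P[OF u]] .
  also have "\<dots> = cl (mul (repr (D x)) (vtx u) + 0)"
    using vanish u repr_I x by (intro cls_add_cong) (auto simp: cls_eq I_mul_left)
  finally show ?thesis by simp
qed

lemma Diff_arr_sandwich:
  assumes e: "e \<in> E"
  shows "D (arr e) = cl (mul (vtx (src e)) (mul (repr (D (arr e))) (vtx (tgt e))))"
proof -
  have V: "src e \<in> V" "tgt e \<in> V" using st e by auto
  have "D (arr e) = D (mul (vtx (src e)) (mul (arr e) (vtx (tgt e))))"
    by (simp add: mul_delta_vtx mul_vtx_delta pend_def)
  also have "\<dots> = cl (mul (vtx (src e)) (repr (D (mul (arr e) (vtx (tgt e))))))"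
    using V arr_P[OF e] by (intro Diff_vtx_mul_left) (auto intro: P_mul vtx_P)
  also have "\<dots> = cl (mul (vtx (src e)) (mul (repr (D (arr e))) (vtx (tgt e))))"
  proof (rule cls_mul_left_cong)
    show "cl (repr (D (mul (arr e) (vtx (tgt e))))) = cl (mul (repr (D (arr e))) (vtx (tgt e)))"
      using Diff_vtx_mul_right[OF V(2) arr_P[OF e]] Diff_repr(2)[OF D] Diff_repr(1)[OF D] V
      by (simp add: repr_cls P_mul vtx_P)
  qed (use D V in \<open>auto intro: P_mul vtx_P Diff_repr\<close>)
  finally show ?thesis .
qed

lemma Diff_arr_parallel_expansion:
  assumes e: "e \<in> E"
  obtains S \<beta> where "finite S" "S \<subseteq> Qb" "\<forall>s\<in>S. parallel e s"
    "D (arr e) = cl (\<Sum>s\<in>S. psc (\<beta> s) (brep s))"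
proof -
  have V: "src e \<in> V" "tgt e \<in> V" using st e by auto
  obtain S0 \<beta> where S0: "finite S0" "S0 \<subseteq> Qb" "repr (D (arr e)) - (\<Sum>s\<in>S0. psc (\<beta> s) (brep s)) \<in> I"
    using quot_basis_span[OF Diff_repr(1)[OF D]] by blast
  let ?y = "\<Sum>s\<in>S0. psc (\<beta> s) (brep s)"
  have yP: "?y \<in> P" using S0 brep_P by (auto intro!: P_sum P_psc)
  have dP: "repr (D (arr e)) \<in> P" using D by (rule Diff_repr)
  have "cl (repr (D (arr e))) = cl ?y" using S0(3) by (simp only: cls_eq)
  then have "cl (mul (repr (D (arr e))) (vtx (tgt e))) = cl (mul ?y (vtx (tgt e)))"
    by (rule cls_mul_right_cong[OF dP yP vtx_P[OF V(2)]])
  then have "cl (mul (vtx (src e)) (mul (repr (D (arr e))) (vtx (tgt e))))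
      = cl (mul (vtx (src e)) (mul ?y (vtx (tgt e))))"
    by (rule cls_mul_left_cong[OF P_mul[OF dP vtx_P[OF V(2)]] P_mul[OF yP vtx_P[OF V(2)]] vtx_P[OF V(1)]])
  with Diff_arr_sandwich[OF e] have "D (arr e) = cl (mul (vtx (src e)) (mul ?y (vtx (tgt e))))"
    by (rule trans)
  also have "mul (vtx (src e)) (mul ?y (vtx (tgt e)))
      = (\<Sum>s\<in>S0. psc (\<beta> s) (mul (vtx (src e)) (mul (brep s) (vtx (tgt e)))))"
    using S0 V
    by (simp add: pmult_lincomb_left pmult_lincomb_right P_finsupp brep_P vtx_P P_mul subset_iff)
  also have "\<dots> = (\<Sum>s\<in>S0. if parallel e s then psc (\<beta> s) (brep s) else 0)"
    by (intro sum.cong refl) (auto simp: brep_mul_vtx vtx_mul_brep parallel_def)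
  also have "\<dots> = (\<Sum>s\<in>{s\<in>S0. parallel e s}. psc (\<beta> s) (brep s))"
    using S0(1) by (rule sum.inter_filter[symmetric])
  finally show ?thesis using S0 by (intro that[of "{s\<in>S0. parallel e s}" \<beta>]) auto
qed

end

context
  fixes S :: "'e \<Rightarrow> ('v,'e,'k) pa set set" and \<beta> :: "'e \<Rightarrow> ('v,'e,'k) pa set \<Rightarrow> 'k"
  assumes S: "\<And>e. e \<in> E \<Longrightarrow> finite (S e) \<and> S e \<subseteq> Qb \<and> (\<forall>s\<in>S e. parallel e s)"
begin

lemma Sigma_parallel:
  assumes "j \<in> Sigma E S"
  shows "fst j \<in> E" "snd j \<in> Qb" "parallel (fst j) (snd j)"
proof -
  obtain e s where "j = (e, s)" "e \<in> E" "s \<in> S e" using assms by blast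
  then show "fst j \<in> E" "snd j \<in> Qb" "parallel (fst j) (snd j)" using S[of e] by auto
qed

lemma finite_Sigma_parallel: "finite (Sigma E S)"
  using finE S by (intro finite_SigmaI) auto

lemma Drs_Sigma_Diff: "j \<in> Sigma E S \<Longrightarrow> case_prod Drs' j \<in> Diff'"
  using Sigma_parallel Drs(1) by (auto simp: split_beta)

lemma Drs_Sigma_B2: "case_prod Drs' ` Sigma E S \<subseteq> B2'"
  unfolding B2_eq using Sigma_parallel by fastforce

lemma lin_comb_Drs_vtx:
  assumes u: "u \<in> V"
  shows "lin_comb (Sigma E S) (case_prod Drs') (case_prod \<beta>) (vtx u) = I"
proof -
  have "lin_comb (Sigma E S) (case_prod Drs') (case_prod \<beta>) (vtx u)
      = cl (\<Sum>j\<in>Sigma E S. psc (case_prod \<beta> j) 0)"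
    using Sigma_parallel Drs(4) u
    by (intro lin_comb_cls[OF finite_Sigma_parallel]) (auto simp: split_beta P_zero cls_zero)
  then show ?thesis by (simp add: cls_zero)
qed

lemma lin_comb_Drs_arr:
  assumes e0: "e0 \<in> E"
  shows "lin_comb (Sigma E S) (case_prod Drs') (case_prod \<beta>) (arr e0)
       = cl (\<Sum>s\<in>S e0. psc (\<beta> e0 s) (brep s))"
proof -
  have "lin_comb (Sigma E S) (case_prod Drs') (case_prod \<beta>) (arr e0)
      = cl (\<Sum>j\<in>Sigma E S. psc (case_prod \<beta> j) (if fst j = e0 then brep (snd j) else 0))"
    using Sigma_parallel Drs(2,3) e0 qrep_path_cls(2)
    by (intro lin_comb_cls[OF finite_Sigma_parallel]) (auto simp: split_beta brep_P P_zero cls_zero)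
  also have "(\<Sum>j\<in>Sigma E S. psc (case_prod \<beta> j) (if fst j = e0 then brep (snd j) else 0))
      = (\<Sum>(e, s)\<in>Sigma E S. psc (\<beta> e s) (if e = e0 then brep s else 0))"
    by (intro sum.cong refl) (auto simp: split_beta)
  also have "\<dots> = (\<Sum>e\<in>E. \<Sum>s\<in>S e. psc (\<beta> e s) (if e = e0 then brep s else 0))"
    by (rule sum.Sigma[symmetric]) (use finE S in auto)
  also have "\<dots> = (\<Sum>e\<in>E. if e = e0 then (\<Sum>s\<in>S e. psc (\<beta> e s) (brep s)) else 0)"
    by (intro sum.cong refl) auto
  also have "\<dots> = (\<Sum>s\<in>S e0. psc (\<beta> e0 s) (brep s))" using finE e0 by simp
  finally show ?thesis .
qed

end

lemma Diff_vanishing_on_vertices_span: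
  assumes D: "D \<in> Diff'" and vanish: "\<forall>u\<in>V. D (vtx u) = I"
  obtains S c where "finite S" "S \<subseteq> B2'" "D = lin_comb S (\<lambda>F. F) c"
proof -
  have "\<forall>e\<in>E. \<exists>p. finite (fst p) \<and> fst p \<subseteq> Qb \<and> (\<forall>s\<in>fst p. parallel e s)
      \<and> D (arr e) = cl (\<Sum>s\<in>fst p. psc (snd p s) (brep s))"
  proof
    fix e assume "e \<in> E"
    then obtain S \<beta> where "finite S" "S \<subseteq> Qb" "\<forall>s\<in>S. parallel e s"
        "D (arr e) = cl (\<Sum>s\<in>S. psc (\<beta> s) (brep s))"
      by (rule Diff_arr_parallel_expansion[OF D vanish])
    then show "\<exists>p. finite (fst p) \<and> fst p \<subseteq> Qb \<and> (\<forall>s\<in>fst p. parallel e s)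
        \<and> D (arr e) = cl (\<Sum>s\<in>fst p. psc (snd p s) (brep s))"
      by (intro exI[of _ "(S, \<beta>)"]) simp
  qed
  then obtain f where f: "\<forall>e\<in>E. finite (fst (f e)) \<and> fst (f e) \<subseteq> Qb \<and> (\<forall>s\<in>fst (f e). parallel e s)
      \<and> D (arr e) = cl (\<Sum>s\<in>fst (f e). psc (snd (f e) s) (brep s))"
    by (rule bchoice[THEN exE])
  define S where "S e = fst (f e)" for e
  define \<beta> where "\<beta> e = snd (f e)" for e
  have S: "\<And>e. e \<in> E \<Longrightarrow> finite (S e) \<and> S e \<subseteq> Qb \<and> (\<forall>s\<in>S e. parallel e s)"
    using f unfolding S_def by auto
  have D_arr: "\<forall>e\<in>E. D (arr e) = cl (\<Sum>s\<in>S e. psc (\<beta> e s) (brep s))"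
    using f unfolding S_def \<beta>_def by auto
  have "D = lin_comb (Sigma E S) (case_prod Drs') (case_prod \<beta>)"
  proof (rule Diff_eq_on_generators[OF D lin_comb_Diff[OF finite_Sigma_parallel[OF S] Drs_Sigma_Diff[OF S]]])
    show "\<forall>u\<in>V. D (vtx u) = lin_comb (Sigma E S) (case_prod Drs') (case_prod \<beta>) (vtx u)"
      using vanish lin_comb_Drs_vtx[OF S] by simp
    show "\<forall>e\<in>E. D (arr e) = lin_comb (Sigma E S) (case_prod Drs') (case_prod \<beta>) (arr e)"
      using D_arr lin_comb_Drs_arr[OF S] by simp
  qed
  then show ?thesis
    using finite_Sigma_parallel[OF S] Drs_Sigma_B2[OF S] lin_comb_image[OF finite_Sigma_parallel[OF S]]
    by (intro that[of "case_prod Drs' ` Sigma E S"]) auto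
qed

text \<open>Loops commute with all vertices, so only basis elements with distinct ends are needed to
  realize the values of an operator on the vertices by inner operators.\<close>

lemma Diff_inner_part:
  assumes D: "D \<in> Diff'"
  obtains A a where "finite A" "A \<subseteq> QA'" "\<forall>u\<in>V. D (vtx u) = lin_comb A Dinner' a (vtx u)"
proof -
  obtain \<mu> where mu: "\<mu> \<in> P" "\<forall>u\<in>V. D (vtx u) = cl (mul \<mu> (vtx u) - mul (vtx u) \<mu>)"
    using Diff_inner_on_vertices[OF D] by blast
  obtain S a where S: "finite S" "S \<subseteq> Qb" "\<mu> - (\<Sum>q\<in>S. psc (a q) (brep q)) \<in> I"
    using quot_basis_span[OF mu(1)] by blast
  let ?\<nu> = "\<Sum>q\<in>S. psc (a q) (brep q)"
  have nuP: "?\<nu> \<in> P" using S brep_P by (auto intro!: P_sum P_psc)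
  have "D (vtx u) = lin_comb (S \<inter> QA') Dinner' a (vtx u)" if u: "u \<in> V" for u
  proof -
    have loop: "Dinner' q (vtx u) = I" if "q \<in> S - S \<inter> QA'" for q
      using that S(2) Dinner_basis_vtx[OF _ u, of q] by (auto simp: QA_def cls_zero)
    have "lin_comb (S \<inter> QA') Dinner' a (vtx u) = lin_comb S Dinner' a (vtx u)"
      using S(1) loop by (intro lin_comb_mono_neutral[symmetric]) auto
    also have "\<dots> = cl (mul ?\<nu> (vtx u) - mul (vtx u) ?\<nu>)"
      using S(1,2) u by (intro lin_comb_Dinner vtx_P)
    also have "\<dots> = cl (mul \<mu> (vtx u) - mul (vtx u) \<mu>)"
    proof -
      have "(mul \<mu> (vtx u) - mul (vtx u) \<mu>) - (mul ?\<nu> (vtx u) - mul (vtx u) ?\<nu>)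
          = mul (\<mu> - ?\<nu>) (vtx u) - mul (vtx u) (\<mu> - ?\<nu>)"
        using mu(1) nuP u by (simp add: mul_diff_left mul_diff_right vtx_P algebra_simps)
      also have "\<dots> \<in> I"
        using I_mul_right[OF vtx_P[OF u] S(3)] I_mul_left[OF vtx_P[OF u] S(3)] by (rule I_diff)
      finally show ?thesis by (simp only: cls_eq[symmetric])
    qed
    finally show ?thesis using mu(2) u by simp
  qed
  moreover have "finite (S \<inter> QA')" "S \<inter> QA' \<subseteq> QA'" using S(1) by auto
  ultimately show ?thesis by (intro that) auto
qed

lemma B_spanning:
  assumes D: "D \<in> Diff'"
  obtains S c where "finite S" "S \<subseteq> B1' \<union> B2'" "D = lin_comb S (\<lambda>F. F) c"
proof -
  obtain A a where A: "finite A" "A \<subseteq> QA'" "\<forall>u\<in>V. D (vtx u) = lin_comb A Dinner' a (vtx u)"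
    by (rule Diff_inner_part[OF D])
  have Dinner_A: "Dinner' q \<in> Diff'" if "q \<in> A" for q
    using that A(2) Dinner_basis_Diff unfolding QA_def by auto
  define Dn where "Dn = lin_comb A Dinner' a"
  have Dn: "Dn \<in> Diff'" unfolding Dn_def using A(1) Dinner_A by (rule lin_comb_Diff)
  define D1 where "D1 = lin_comb (UNIV :: bool set) (\<lambda>b. if b then D else Dn) (\<lambda>b. if b then 1 else -1)"
  have D1: "D1 \<in> Diff'" unfolding D1_def using D Dn by (intro lin_comb_Diff) auto
  have D1_apply: "D1 x = cl (repr (D x) - repr (Dn x))" for x
    unfolding D1_def lin_comb_def UNIV_bool by (simp add: psc_minus_one)
  have "\<forall>u\<in>V. D1 (vtx u) = I"
    using A(3) by (simp add: D1_apply Dn_def cls_zero)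
  then obtain T c where T: "finite T" "T \<subseteq> B2'" "D1 = lin_comb T (\<lambda>F. F) c"
    by (rule Diff_vanishing_on_vertices_span[OF D1])
  let ?K = "A <+> T" and ?\<Phi> = "case_sum Dinner' (\<lambda>F. F)" and ?c = "case_sum a c"
  have "D x = lin_comb ?K ?\<Phi> ?c x" for x
  proof -
    have "lin_comb ?K ?\<Phi> ?c x = cl (repr (Dn x) + repr (D1 x))"
      unfolding lin_comb_Plus[OF A(1) T(1)] using Diff_repr(2)[OF Dn] Diff_repr(2)[OF D1]
      by (intro cls_add_cong) (simp_all add: Dn_def T(3) lin_comb_def)
    also have "\<dots> = cl (repr (Dn x) + (repr (D x) - repr (Dn x)))"
      using Diff_repr(2)[OF D1, of x] by (intro cls_add_cong) (simp_all add: D1_apply)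
    also have "\<dots> = D x" using Diff_repr(2)[OF D] by simp
    finally show ?thesis ..
  qed
  then have "D = lin_comb (?\<Phi> ` ?K) (\<lambda>F. F) (\<lambda>F. \<Sum>k\<in>{k \<in> ?K. ?\<Phi> k = F}. ?c k)"
    using lin_comb_image[of ?K] A(1) T(1) by auto
  moreover have "?\<Phi> ` ?K \<subseteq> B1' \<union> B2'" using A(2) T(2) unfolding B1_def by auto
  ultimately show ?thesis using A(1) T(1) by (intro that) auto
qed

lemma B_is_diff_basis: "is_diff_basis V E src tgt I (B1' \<union> B2')"
proof -
  have sub: "B1' \<union> B2' \<subseteq> Diff'" using B1_Diff B2_Diff by blast
  have "\<exists>S c. finite S \<and> S \<subseteq> B1' \<union> B2' \<and> D = (\<lambda>x. qsum I S (\<lambda>F. qscale I (c F) (F x)))"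
    if D: "D \<in> Diff'" for D
  proof -
    obtain S c where S: "finite S" "S \<subseteq> B1' \<union> B2'" "D = lin_comb S (\<lambda>F. F) c"
      by (rule B_spanning[OF D])
    moreover have "(\<lambda>x. qsum I S (\<lambda>F. qscale I (c F) (F x))) = lin_comb S (\<lambda>F. F) c"
      using S(1,2) sub by (intro qsum_eq_lin_comb) auto
    ultimately show ?thesis by (intro exI[of _ S] exI[of _ c]) simp
  qed
  moreover have "\<forall>F\<in>S. c F = 0"
    if "finite S" "S \<subseteq> B1' \<union> B2'" "(\<lambda>x. qsum I S (\<lambda>F. qscale I (c F) (F x))) = (\<lambda>x. I)" for S c
    using that qsum_eq_lin_comb[OF that(1), of c] sub by (intro B_lin_indep) auto
  ultimately show ?thesis unfolding is_diff_basis_def using sub by blast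
qed

end

theorem theorem2p7:
  fixes V :: "'v set" and E :: "'e set" and src tgt :: "'e \<Rightarrow> 'v"
    and I :: "('v,'e,'k::field) pa set" and Qb :: "('v,'e,'k) pa set set"
  assumes "finite_connected_quiver V E src tgt"
    and "is_ideal V E src tgt I"
    and "I \<subseteq> R2 V E src tgt"
    and "is_quot_basis V E src tgt I Qb"
    and "\<forall>q\<in>Qb. \<exists>p. is_path V E src tgt p \<and> q = cls I (delta p)"
    and "\<forall>v\<in>V. cls I (delta (v, [])) \<in> Qb"
    and "\<forall>e\<in>E. cls I (delta (src e, [e])) \<in> Qb"
  shows "is_diff_basis V E src tgt I (B1 V E src tgt I Qb \<union> B2 V E src tgt I Qb)"
proof -
  interpret quiver_quotient V E src tgt I Qb
    using assms unfolding finite_connected_quiver_def by unfold_locales auto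
  show ?thesis by (rule B_is_diff_basis)
qed

end
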